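(* Let $\mu,q$ be positive integers with $q\ge 2$. There is a bijection between the set of isomorphism classes of symmetric $(\mu,q)$-nets and the set of equivalence classes of codes $C\subseteq[q]^{\mu q}$ with $|C|=\mu q^2$ and minimum Hamming distance at least $\mu q-\mu$.
   Context: $[q]=\{0,\dots,q-1\}$; the Hamming distance of two words is the number of coordinates in which they differ. A symmetric $(\mu,q)$-net is a pair $(X,\mathcal B)$ where $X$ is a set of $\mu q^2$ points and $\mathcal B$ is a collection of subsets of $X$ of size $\mu q$ (blocks) such that: (s1) $\mathcal B$ can be partitioned into $\mu q$ classes (block parallel classes), each of which is a partition of $X$; (s2) any two blocks belonging to different block parallel classes intersect in exactly $\mu$ points; (s3) $X$ can be partitioned into $\mu q$ sets of $q$ points (point parallel classes) such that any two points from different point parallel classes lie together in exactly $\mu$ blocks, while two distinct points from the same point parallel class lie together in no block. Two symmetric nets $(X,\mathcal B)$ and $(X',\mathcal B')$ are isomorphic if there is a bijection $\phi:X\to X'$ with $\{\phi(B):B\in\mathcal B\}=\mathcal B'$. Two codes $C,D\subseteq[q]^n$ are equivalent if $D$ is obtained from $C$ by permuting the $n$ coordinates and then applying, in each coordinate separately, a permutation of the symbols $[q]$. *)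

theory Defs
  imports Main "HOL-Library.Disjoint_Sets" "HOL-Combinatorics.Permutations"
begin

definition symmetric_net :: "nat \<Rightarrow> nat \<Rightarrow> nat set \<Rightarrow> nat set set \<Rightarrow> bool" where
  "symmetric_net \<mu> q X B \<longleftrightarrow>
     finite X \<and> card X = \<mu> * q^2 \<and>
     (\<forall>b\<in>B. b \<subseteq> X \<and> card b = \<mu> * q) \<and>
     (\<exists>PB :: nat set set set.
        partition_on B PB \<and> finite PB \<and> card PB = \<mu> * q \<and>
        (\<forall>c\<in>PB. partition_on X c) \<and>
        (\<forall>c\<in>PB. \<forall>c'\<in>PB. c \<noteq> c' \<longrightarrow>
            (\<forall>b\<in>c. \<forall>b'\<in>c'. card (b \<inter> b') = \<mu>))) \<and>
     (\<exists>PX :: nat set set.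
        partition_on X PX \<and> finite PX \<and> card PX = \<mu> * q \<and>
        (\<forall>P\<in>PX. card P = q) \<and>
        (\<forall>P\<in>PX. \<forall>P'\<in>PX. \<forall>x\<in>P. \<forall>y\<in>P'.
            (P \<noteq> P' \<longrightarrow> card {b\<in>B. x \<in> b \<and> y \<in> b} = \<mu>) \<and>
            (P = P' \<and> x \<noteq> y \<longrightarrow> card {b\<in>B. x \<in> b \<and> y \<in> b} = 0)))"

definition symmetric_nets :: "nat \<Rightarrow> nat \<Rightarrow> (nat set \<times> nat set set) set" where
  "symmetric_nets \<mu> q = {(X, B). symmetric_net \<mu> q X B}"

definition net_iso :: "((nat set \<times> nat set set) \<times> (nat set \<times> nat set set)) set" where
  "net_iso = {((X, B), (X', B')). \<exists>\<phi>. bij_betw \<phi> X X' \<and> (\<lambda>b. \<phi> ` b) ` B = B'}"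

definition words :: "nat \<Rightarrow> nat \<Rightarrow> nat list set" where
  "words q n = {w. length w = n \<and> (\<forall>i<n. w ! i < q)}"

definition hamming :: "nat list \<Rightarrow> nat list \<Rightarrow> nat" where
  "hamming u v = card {i. i < length u \<and> u ! i \<noteq> v ! i}"

definition codes :: "nat \<Rightarrow> nat \<Rightarrow> nat \<Rightarrow> nat \<Rightarrow> nat list set set" where
  "codes q n M d = {C. C \<subseteq> words q n \<and> card C = M \<and>
                      (\<forall>u\<in>C. \<forall>v\<in>C. u \<noteq> v \<longrightarrow> d \<le> hamming u v)}"

definition code_equiv :: "nat \<Rightarrow> nat \<Rightarrow> (nat list set \<times> nat list set) set" where
  "code_equiv q n = {(C, D). \<exists>\<sigma> \<pi>. \<sigma> permutes {0..<n} \<and> (\<forall>i<n. \<pi> i permutes {0..<q}) \<and>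
        D = (\<lambda>w. map (\<lambda>i. \<pi> i (w ! \<sigma> i)) [0..<n]) ` C}"

end

theory Submission
  imports Defs Complex_Main
begin

text \<open>A code with these parameters meets the Plotkin bound with equality, and so does every
  shortened code \<open>{w \<in> C. w ! i = a}\<close>; the equality case forces every symbol to occur exactly
  \<open>\<mu> q\<close> times in each coordinate, every pair of symbols exactly \<open>\<mu>\<close> times in each pair of
  coordinates, and any two codewords to agree in either \<open>0\<close> or \<open>\<mu>\<close> coordinates. A second-moment
  count shows that "agreeing nowhere" is an equivalence relation with classes of size \<open>q\<close>.
  Hence codewords as points and the sets \<open>{w. w ! i = a}\<close> as blocks form a symmetric net, the
  coordinates indexing the block parallel classes. Conversely, labelling the blocks of each parallel
  class of a net by \<open>[q]\<close> and recording, for every point, the labels of the blocks through it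
  yields such a code. Both constructions are inverse up to isomorphism and equivalence.\<close>

lemma quotient_eq_iff_rel:
  assumes "\<And>x. x \<in> A \<Longrightarrow> (x, x) \<in> r" "\<And>x z. x \<in> A \<Longrightarrow> (x, z) \<in> r \<Longrightarrow> (z, x) \<in> r" "trans r"
    and "x \<in> A" "y \<in> A"
  shows "r``{x} = r``{y} \<longleftrightarrow> (x, y) \<in> r"
proof
  assume "r``{x} = r``{y}"
  then show "(x, y) \<in> r" using assms by blast
next
  assume "(x, y) \<in> r"
  with assms have "(y, x) \<in> r" by blast
  with \<open>(x, y) \<in> r\<close> \<open>trans r\<close> show "r``{x} = r``{y}" by (auto dest: transD)
qed

lemma bij_betw_quotients_if_compatible:
  assumes refl_r: "\<And>x. x \<in> A \<Longrightarrow> (x, x) \<in> r"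
    and sym_r: "\<And>x z. x \<in> A \<Longrightarrow> (x, z) \<in> r \<Longrightarrow> (z, x) \<in> r" and "trans r"
    and refl_s: "\<And>y. y \<in> B \<Longrightarrow> (y, y) \<in> s"
    and sym_s: "\<And>y z. y \<in> B \<Longrightarrow> (y, z) \<in> s \<Longrightarrow> (z, y) \<in> s" and "trans s"
    and total: "\<And>x. x \<in> A \<Longrightarrow> \<exists>y\<in>B. R x y" and onto: "\<And>y. y \<in> B \<Longrightarrow> \<exists>x\<in>A. R x y"
    and compat: "\<And>x x' y y'. \<lbrakk>x \<in> A; x' \<in> A; y \<in> B; y' \<in> B; R x y; R x' y'\<rbrakk>
                   \<Longrightarrow> (x, x') \<in> r \<longleftrightarrow> (y, y') \<in> s"
  shows "\<exists>f. bij_betw f (A//r) (B//s)"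
proof -
  note r_iff = quotient_eq_iff_rel[of A r, OF refl_r sym_r \<open>trans r\<close>]
  note s_iff = quotient_eq_iff_rel[of B s, OF refl_s sym_s \<open>trans s\<close>]
  define g where "g x = (SOME y. y \<in> B \<and> R x y)" for x
  have g: "g x \<in> B \<and> R x (g x)" if "x \<in> A" for x
    unfolding g_def using total[OF that] by (rule someI2_bex) blast
  define rep where "rep K = (SOME x. x \<in> A \<and> K = r``{x})" for K
  have rep: "rep K \<in> A \<and> K = r``{rep K}" if "K \<in> A//r" for K
  proof -
    have "\<exists>x. x \<in> A \<and> K = r``{x}" using that by (auto elim!: quotientE)
    then show ?thesis unfolding rep_def by (rule someI_ex)
  qed
  define f where "f K = s``{g (rep K)}" for K
  have "inj_on f (A//r)"
  proof (rule inj_onI)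
    fix K1 K2 assume K: "K1 \<in> A//r" "K2 \<in> A//r" "f K1 = f K2"
    then have "(g (rep K1), g (rep K2)) \<in> s" using s_iff g rep unfolding f_def by blast
    then have "(rep K1, rep K2) \<in> r" using compat g rep K(1,2) by blast
    then show "K1 = K2" using r_iff rep K(1,2) by metis
  qed
  moreover have "f ` (A//r) = B//s"
  proof
    show "f ` (A//r) \<subseteq> B//s" unfolding f_def using g rep by (auto intro: quotientI)
    show "B//s \<subseteq> f ` (A//r)"
    proof
      fix L assume "L \<in> B//s"
      then obtain y where y: "y \<in> B" "L = s``{y}" by (auto elim: quotientE)
      then obtain x where x: "x \<in> A" "R x y" using onto by blast
      have K: "r``{x} \<in> A//r" using x by (auto intro: quotientI)
      then have "(rep (r``{x}), x) \<in> r" using r_iff rep x(1) by metis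
      then have "(g (rep (r``{x})), y) \<in> s" using compat g rep[OF K] x y by blast
      then have "f (r``{x}) = L" unfolding f_def using s_iff g rep[OF K] y by blast
      then show "L \<in> f ` (A//r)" using K by blast
    qed
  qed
  ultimately show ?thesis unfolding bij_betw_def by blast
qed

lemma net_iso_refl: "(N, N) \<in> net_iso"
  unfolding net_iso_def by (cases N) (auto intro!: exI[of _ id])

lemma net_iso_sym:
  assumes "\<forall>b\<in>B. b \<subseteq> X" and "((X, B), (X', B')) \<in> net_iso"
  shows "((X', B'), (X, B)) \<in> net_iso"
proof -
  obtain \<phi> where \<phi>: "bij_betw \<phi> X X'" "(\<lambda>b. \<phi> ` b) ` B = B'"
    using assms(2) unfolding net_iso_def by auto
  have "bij_betw (inv_into X \<phi>) X' X" using \<phi>(1) by (rule bij_betw_inv_into)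
  moreover have "(\<lambda>b. inv_into X \<phi> ` b) ` B' = B"
  proof -
    have "(\<lambda>b. inv_into X \<phi> ` b) ` B' = (\<lambda>b. inv_into X \<phi> ` \<phi> ` b) ` B" using \<phi>(2) by auto
    also have "\<dots> = B"
      using assms(1) \<phi>(1) by (auto simp: bij_betw_def inv_into_image_cancel)
    finally show ?thesis .
  qed
  ultimately show ?thesis unfolding net_iso_def by auto
qed

lemma net_iso_trans: "trans net_iso"
proof (rule transI)
  fix N N' N'' assume "(N, N') \<in> net_iso" "(N', N'') \<in> net_iso"
  then obtain X B X' B' X'' B'' \<phi> \<psi> where N: "N = (X, B)" "N' = (X', B')" "N'' = (X'', B'')"
    and \<phi>: "bij_betw \<phi> X X'" "(\<lambda>b. \<phi> ` b) ` B = B'"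
    and \<psi>: "bij_betw \<psi> X' X''" "(\<lambda>b. \<psi> ` b) ` B' = B''"
    unfolding net_iso_def by auto
  have "bij_betw (\<psi> \<circ> \<phi>) X X''" using \<phi>(1) \<psi>(1) by (rule bij_betw_trans)
  moreover have "(\<lambda>b. (\<psi> \<circ> \<phi>) ` b) ` B = B''"
    using \<phi>(2) \<psi>(2) by (auto simp: image_comp[symmetric] image_image)
  ultimately show "(N, N'') \<in> net_iso" using N unfolding net_iso_def by auto
qed

definition recode :: "nat \<Rightarrow> (nat \<Rightarrow> nat) \<Rightarrow> (nat \<Rightarrow> nat \<Rightarrow> nat) \<Rightarrow> nat list \<Rightarrow> nat list" where
  "recode n \<sigma> \<pi> w = map (\<lambda>i. \<pi> i (w ! \<sigma> i)) [0..<n]"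

lemma code_equiv_iff_recode:
  "(C, D) \<in> code_equiv q n \<longleftrightarrow>
     (\<exists>\<sigma> \<pi>. \<sigma> permutes {0..<n} \<and> (\<forall>i<n. \<pi> i permutes {0..<q}) \<and> D = recode n \<sigma> \<pi> ` C)"
  unfolding code_equiv_def recode_def by auto

lemma recode_nth: "i < n \<Longrightarrow> recode n \<sigma> \<pi> w ! i = \<pi> i (w ! \<sigma> i)"
  and length_recode: "length (recode n \<sigma> \<pi> w) = n"
  unfolding recode_def by auto

lemma code_equiv_refl:
  assumes "\<forall>w\<in>C. length w = n"
  shows "(C, C) \<in> code_equiv q n"
proof -
  have "recode n id (\<lambda>i. id) w = w" if "w \<in> C" for w
    using assms that by (intro nth_equalityI) (auto simp: recode_nth length_recode)
  then have "C = recode n id (\<lambda>i. id) ` C" by force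
  then show ?thesis
    unfolding code_equiv_iff_recode by (auto intro!: exI[of _ id] exI[of _ "\<lambda>i. id"] permutes_id)
qed

lemma code_equiv_trans: "trans (code_equiv q n)"
proof (rule transI)
  fix C D E assume "(C, D) \<in> code_equiv q n" "(D, E) \<in> code_equiv q n"
  then obtain \<sigma>1 \<pi>1 \<sigma>2 \<pi>2 where
        1: "\<sigma>1 permutes {0..<n}" "\<forall>i<n. \<pi>1 i permutes {0..<q}" "D = recode n \<sigma>1 \<pi>1 ` C"
    and 2: "\<sigma>2 permutes {0..<n}" "\<forall>i<n. \<pi>2 i permutes {0..<q}" "E = recode n \<sigma>2 \<pi>2 ` D"
    unfolding code_equiv_iff_recode by blast
  define \<pi> where "\<pi> i = \<pi>2 i \<circ> \<pi>1 (\<sigma>2 i)" for i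
  have \<sigma>2_less: "\<sigma>2 i < n" if "i < n" for i using 2(1) that permutes_in_image by fastforce
  have "\<sigma>1 \<circ> \<sigma>2 permutes {0..<n}" by (rule permutes_compose[OF 2(1) 1(1)])
  moreover have "\<forall>i<n. \<pi> i permutes {0..<q}"
    unfolding \<pi>_def using 1(2) 2(2) \<sigma>2_less by (auto intro: permutes_compose)
  moreover have "recode n \<sigma>2 \<pi>2 (recode n \<sigma>1 \<pi>1 w) = recode n (\<sigma>1 \<circ> \<sigma>2) \<pi> w" for w
    by (intro nth_equalityI) (auto simp: recode_nth length_recode \<sigma>2_less \<pi>_def)
  then have "E = recode n (\<sigma>1 \<circ> \<sigma>2) \<pi> ` C" using 1(3) 2(3) by (auto simp: image_image)
  ultimately show "(C, E) \<in> code_equiv q n" unfolding code_equiv_iff_recode by blast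
qed

lemma code_equiv_sym:
  assumes "\<forall>w\<in>C. length w = n" and "(C, D) \<in> code_equiv q n"
  shows "(D, C) \<in> code_equiv q n"
proof -
  obtain \<sigma> \<pi> where \<sigma>: "\<sigma> permutes {0..<n}" and \<pi>: "\<forall>i<n. \<pi> i permutes {0..<q}"
    and D: "D = recode n \<sigma> \<pi> ` C"
    using assms(2) unfolding code_equiv_iff_recode by blast
  define \<pi>' where "\<pi>' i = inv (\<pi> (inv \<sigma> i))" for i
  have inv_\<sigma>: "inv \<sigma> permutes {0..<n}" using \<sigma> by (rule permutes_inv)
  have inv_\<sigma>_less: "inv \<sigma> i < n" if "i < n" for i using inv_\<sigma> that permutes_in_image by fastforce
  have "\<forall>i<n. \<pi>' i permutes {0..<q}" unfolding \<pi>'_def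
    using \<pi> inv_\<sigma>_less by (auto intro: permutes_inv)
  moreover have "recode n (inv \<sigma>) \<pi>' (recode n \<sigma> \<pi> w) = w" if "w \<in> C" for w
  proof (rule nth_equalityI)
    show "length (recode n (inv \<sigma>) \<pi>' (recode n \<sigma> \<pi> w)) = length w"
      using assms(1) that by (simp add: length_recode)
    fix i assume "i < length (recode n (inv \<sigma>) \<pi>' (recode n \<sigma> \<pi> w))"
    then have i: "i < n" by (simp add: length_recode)
    have "\<sigma> (inv \<sigma> i) = i" using \<sigma> permutes_inverses(1) by fastforce
    moreover have "bij (\<pi> (inv \<sigma> i))" using \<pi> inv_\<sigma>_less[OF i] permutes_bij by blast
    ultimately show "recode n (inv \<sigma>) \<pi>' (recode n \<sigma> \<pi> w) ! i = w ! i"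
      using i inv_\<sigma>_less[OF i] by (simp add: recode_nth \<pi>'_def bij_is_inj)
  qed
  then have "C = recode n (inv \<sigma>) \<pi>' ` D" using D by (auto simp: image_image)
  ultimately show ?thesis unfolding code_equiv_iff_recode using inv_\<sigma> by blast
qed

lemma length_mem_codes: "C \<in> codes q n M d \<Longrightarrow> \<forall>w\<in>C. length w = n"
  unfolding codes_def words_def by auto

lemma inj_on_recode:
  assumes "\<sigma> permutes {0..<n}" "\<forall>i<n. \<pi> i permutes {0..<q}" "\<forall>w\<in>C. length w = n"
  shows "inj_on (recode n \<sigma> \<pi>) C"
proof (rule inj_onI)
  fix u v assume uv: "u \<in> C" "v \<in> C" "recode n \<sigma> \<pi> u = recode n \<sigma> \<pi> v"
  show "u = v"
  proof (rule nth_equalityI)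
    show "length u = length v" using assms(3) uv by simp
    fix j assume "j < length u"
    then have j: "j < n" using assms(3) uv by simp
    define i where "i = inv \<sigma> j"
    have i: "i < n" unfolding i_def using permutes_in_image[OF permutes_inv[OF assms(1)]] j by simp
    have "\<sigma> i = j" unfolding i_def using permutes_inverses(1)[OF assms(1)] by simp
    then have "\<pi> i (u ! j) = \<pi> i (v ! j)" using uv(3) i by (metis recode_nth)
    moreover have "inj (\<pi> i)" using assms(2) i permutes_inj by blast
    ultimately show "u ! j = v ! j" by (simp add: inj_eq)
  qed
qed

definition agreements :: "nat set \<Rightarrow> nat list \<Rightarrow> nat list \<Rightarrow> nat" where
  "agreements J u v = card {j\<in>J. u ! j = v ! j}"

definition symbol_count :: "nat list set \<Rightarrow> nat \<Rightarrow> nat \<Rightarrow> nat" where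
  "symbol_count S j b = card {u\<in>S. u ! j = b}"

lemma agreements_self: "finite J \<Longrightarrow> agreements J u u = card J"
  unfolding agreements_def by simp

lemma card_Collect_eq_sum_indicator:
  "finite J \<Longrightarrow> card {j\<in>J. P j} = (\<Sum>j\<in>J. if P j then 1 else 0 :: nat)"
  by (simp add: sum.If_cases Int_def)

lemma sum_if_const_eq_card:
  "finite A \<Longrightarrow> (\<Sum>v\<in>A. if P v then k else 0) = k * card {v\<in>A. P v}"
  by (simp add: card_Collect_eq_sum_indicator sum_distrib_left if_distrib cong: if_cong)

lemma sum_symbol_count:
  assumes "finite S" "\<forall>u\<in>S. u ! j < q"
  shows "(\<Sum>b<q. symbol_count S j b) = card S"
proof -
  have "(\<Sum>b<q. symbol_count S j b) = (\<Sum>b<q. \<Sum>u\<in>S. if u ! j = b then 1 else 0)"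
    unfolding symbol_count_def using assms by (simp add: card_Collect_eq_sum_indicator)
  also have "\<dots> = (\<Sum>u\<in>S. \<Sum>b<q. if u ! j = b then 1 else 0)" by (rule sum.swap)
  also have "\<dots> = (\<Sum>u\<in>S. 1)" using assms(2) by (intro sum.cong refl) (simp add: sum.delta)
  finally show ?thesis by simp
qed

lemma sum_agreements_eq_sum_symbol_count_squares:
  assumes "finite S" "finite J" "\<forall>u\<in>S. \<forall>j\<in>J. u ! j < q"
  shows "(\<Sum>u\<in>S. \<Sum>v\<in>S. agreements J u v) = (\<Sum>j\<in>J. \<Sum>b<q. (symbol_count S j b)\<^sup>2)"
proof -
  let ?ind = "\<lambda>x b. if x = b then 1 else 0 :: nat"
  have "(\<Sum>u\<in>S. \<Sum>v\<in>S. agreements J u v) = (\<Sum>u\<in>S. \<Sum>v\<in>S. \<Sum>j\<in>J. ?ind (u ! j) (v ! j))"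
    unfolding agreements_def using assms by (simp add: card_Collect_eq_sum_indicator)
  also have "\<dots> = (\<Sum>j\<in>J. \<Sum>u\<in>S. \<Sum>v\<in>S. ?ind (u ! j) (v ! j))"
    by (subst sum.swap) (subst (2) sum.swap, rule refl)
  also have "\<dots> = (\<Sum>j\<in>J. \<Sum>u\<in>S. \<Sum>v\<in>S. \<Sum>b<q. ?ind (u ! j) b * ?ind (v ! j) b)"
    using assms(3)
    by (intro sum.cong refl) (simp add: sum.delta' if_distrib[of "\<lambda>x. x * _"] cong: if_cong)
  also have "\<dots> = (\<Sum>j\<in>J. \<Sum>b<q. (\<Sum>u\<in>S. ?ind (u ! j) b) * (\<Sum>v\<in>S. ?ind (v ! j) b))"
    unfolding sum_product by (intro sum.cong refl) (subst sum.swap, subst (2) sum.swap, rule refl)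
  also have "\<dots> = (\<Sum>j\<in>J. \<Sum>b<q. (symbol_count S j b)\<^sup>2)"
    unfolding symbol_count_def power2_eq_square using assms(1)
    by (simp add: card_Collect_eq_sum_indicator)
  finally show ?thesis .
qed

lemma sum_square_deviation:
  fixes x :: "nat \<Rightarrow> real"
  assumes "q > 0" and "(\<Sum>b<q. x b) = s"
  shows "(\<Sum>b<q. (x b - s / q)\<^sup>2) = (\<Sum>b<q. (x b)\<^sup>2) - s\<^sup>2 / q"
proof -
  have "(\<Sum>b<q. (x b - s / q)\<^sup>2) = (\<Sum>b<q. (x b)\<^sup>2 - 2 * (s / q) * x b + (s / q)\<^sup>2)"
    by (intro sum.cong refl) (simp add: power2_diff)
  also have "\<dots> = (\<Sum>b<q. (x b)\<^sup>2) - 2 * (s / q) * (\<Sum>b<q. x b) + q * (s / q)\<^sup>2"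
    by (simp add: sum.distrib sum_subtractf sum_distrib_left)
  also have "\<dots> = (\<Sum>b<q. (x b)\<^sup>2) - s\<^sup>2 / q"
    using assms by (simp add: power2_eq_square field_simps)
  finally show ?thesis .
qed

text \<open>For \<open>m\<close> words of length \<open>n\<close> over \<open>[q]\<close> pairwise agreeing in at most \<open>t\<close> coordinates,
  Plotkin's bound reads \<open>plotkin_slack q n m t \<ge> 0\<close>.\<close>

definition plotkin_slack :: "nat \<Rightarrow> nat \<Rightarrow> nat \<Rightarrow> nat \<Rightarrow> real" where
  "plotkin_slack q n m t =
     real m * real n + real m * (real m - 1) * real t - real n * (real m)\<^sup>2 / real q"

text \<open>Double counting the agreements: the slack is the variance of the symbol counts plus the
  total defect of the pairwise agreements from \<open>t\<close>.\<close>

lemma plotkin_identity: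
  assumes "finite S" "finite J" "\<forall>u\<in>S. \<forall>j\<in>J. u ! j < q" "q > 0"
  shows "(\<Sum>j\<in>J. \<Sum>b<q. (real (symbol_count S j b) - real (card S) / q)\<^sup>2)
         + (\<Sum>u\<in>S. \<Sum>v\<in>S-{u}. (real t - real (agreements J u v)))
       = plotkin_slack q (card J) (card S) t"
proof -
  define s where "s = real (card S)"
  have variance: "(\<Sum>b<q. (real (symbol_count S j b) - s / q)\<^sup>2)
      = (\<Sum>b<q. real ((symbol_count S j b)\<^sup>2)) - s\<^sup>2 / q" if "j \<in> J" for j
  proof -
    have "(\<Sum>b<q. symbol_count S j b) = card S"
      using sum_symbol_count[of S j q] assms that by blast
    then have "(\<Sum>b<q. real (symbol_count S j b)) = s"
      unfolding s_def of_nat_sum[symmetric] by (rule arg_cong)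
    from sum_square_deviation[OF assms(4) this] show ?thesis by simp
  qed
  have defect: "(\<Sum>v\<in>S-{u}. (real t - real (agreements J u v)))
      = (s - 1) * t + card J - (\<Sum>v\<in>S. real (agreements J u v))" if "u \<in> S" for u
  proof -
    have "(\<Sum>v\<in>S-{u}. real (agreements J u v)) = (\<Sum>v\<in>S. real (agreements J u v)) - card J"
      using that assms(1,2) by (simp add: sum_diff1 agreements_self)
    moreover have "(\<Sum>v\<in>S-{u}. real t) = (s - 1) * t"
      using that assms(1) card_gt_0_iff[of S] by (auto simp: s_def of_nat_diff)
    ultimately show ?thesis by (simp add: sum_subtractf)
  qed
  have "(\<Sum>j\<in>J. \<Sum>b<q. real ((symbol_count S j b)\<^sup>2)) = (\<Sum>u\<in>S. \<Sum>v\<in>S. real (agreements J u v))"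
    unfolding of_nat_power[symmetric] of_nat_sum[symmetric]
    using sum_agreements_eq_sum_symbol_count_squares[OF assms(1-3)] by (rule arg_cong[symmetric])
  then have variance_sum: "(\<Sum>j\<in>J. \<Sum>b<q. (real (symbol_count S j b) - s / q)\<^sup>2)
      = (\<Sum>u\<in>S. \<Sum>v\<in>S. real (agreements J u v)) - card J * (s\<^sup>2 / q)"
    using variance by (simp add: sum_subtractf)
  have defect_sum: "(\<Sum>u\<in>S. \<Sum>v\<in>S-{u}. (real t - real (agreements J u v)))
      = s * ((s - 1) * t + card J) - (\<Sum>u\<in>S. \<Sum>v\<in>S. real (agreements J u v))"
    using defect by (simp add: sum_subtractf s_def)
  show ?thesis
    unfolding plotkin_slack_def s_def[symmetric] variance_sum defect_sum
    by (simp add: algebra_simps)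
qed

locale plotkin_setting =
  fixes q t :: nat and S :: "nat list set" and J :: "nat set"
  assumes finite_words: "finite S" and finite_coords: "finite J" and q_pos: "q > 0"
    and symbols_less: "\<forall>u\<in>S. \<forall>j\<in>J. u ! j < q"
    and agreements_le: "\<forall>u\<in>S. \<forall>v\<in>S. u \<noteq> v \<longrightarrow> agreements J u v \<le> t"
begin

lemma defect_nonneg: "u \<in> S \<Longrightarrow> v \<in> S - {u} \<Longrightarrow> 0 \<le> real t - real (agreements J u v)"
  using agreements_le by auto

lemma plotkin_bound: "0 \<le> plotkin_slack q (card J) (card S) t"
  using plotkin_identity[OF finite_words finite_coords symbols_less q_pos, of t] defect_nonneg
  by (smt (verit) sum_nonneg zero_le_power2)

lemma plotkin_equality:
  assumes "plotkin_slack q (card J) (card S) t = 0"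
  shows "\<forall>j\<in>J. \<forall>b<q. real (symbol_count S j b) = real (card S) / q"
    and "\<forall>u\<in>S. \<forall>v\<in>S. u \<noteq> v \<longrightarrow> agreements J u v = t"
proof -
  let ?V = "\<lambda>j. \<Sum>b<q. (real (symbol_count S j b) - real (card S) / q)\<^sup>2"
  let ?D = "\<lambda>u. \<Sum>v\<in>S-{u}. (real t - real (agreements J u v))"
  have V: "0 \<le> ?V j" for j by (intro sum_nonneg) auto
  have D: "0 \<le> ?D u" if "u \<in> S" for u using defect_nonneg that by (intro sum_nonneg) auto
  have "sum ?V J + sum ?D S = 0"
    using plotkin_identity[OF finite_words finite_coords symbols_less q_pos, of t] assms by simp
  moreover have "0 \<le> sum ?V J" "0 \<le> sum ?D S" using V D by (auto intro: sum_nonneg)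
  ultimately have "sum ?V J = 0" "sum ?D S = 0" by linarith+
  then have "\<forall>j\<in>J. ?V j = 0" "\<forall>u\<in>S. ?D u = 0"
    using finite_words finite_coords V D by (simp_all add: sum_nonneg_eq_0_iff)
  then show "\<forall>j\<in>J. \<forall>b<q. real (symbol_count S j b) = real (card S) / q"
    by (simp add: sum_nonneg_eq_0_iff)
  show "\<forall>u\<in>S. \<forall>v\<in>S. u \<noteq> v \<longrightarrow> agreements J u v = t"
  proof (intro ballI impI)
    fix u v assume "u \<in> S" "v \<in> S" "u \<noteq> v"
    then have "?D u = 0" "v \<in> S - {u}" using \<open>\<forall>u\<in>S. ?D u = 0\<close> by auto
    moreover have "finite (S - {u})" using finite_words by simp
    ultimately have "real t - real (agreements J u v) = 0"
      using sum_nonneg_eq_0_iff[of "S - {u}" "\<lambda>v. real t - real (agreements J u v)"]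
        defect_nonneg[OF \<open>u \<in> S\<close>] by simp
    then show "agreements J u v = t" by simp
  qed
qed

end

lemma all_eq_bound_if_sum_eq:
  fixes f :: "'a \<Rightarrow> nat"
  assumes "finite A" "\<forall>a\<in>A. f a \<le> c" "sum f A = card A * c"
  shows "\<forall>a\<in>A. f a = c"
proof -
  have "(\<Sum>a\<in>A. c - f a) = (\<Sum>a\<in>A. c) - sum f A"
    by (rule sum_subtractf_nat) (use assms(2) in auto)
  also have "\<dots> = 0" using assms(3) by simp
  finally show ?thesis using assms by (simp add: sum_eq_0_iff) (meson le_antisym)
qed

lemma agreements_add_hamming:
  assumes "length u = n"
  shows "agreements {0..<n} u v + hamming u v = n"
proof -
  have "hamming u v = card {i\<in>{0..<n}. u ! i \<noteq> v ! i}"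
    unfolding hamming_def using assms by (intro arg_cong[where f = card]) auto
  moreover have "card {0..<n} = card ({i\<in>{0..<n}. u ! i = v ! i} \<union> {i\<in>{0..<n}. u ! i \<noteq> v ! i})"
    by (intro arg_cong[where f = card]) auto
  then have "n = card {i\<in>{0..<n}. u ! i = v ! i} + card {i\<in>{0..<n}. u ! i \<noteq> v ! i}"
    by (simp add: card_Un_disjoint disjoint_iff)
  ultimately show ?thesis unfolding agreements_def by simp
qed

locale extremal_code =
  fixes \<mu> q :: nat and C :: "nat list set"
  assumes mu_pos: "0 < \<mu>" and q_ge_2: "2 \<le> q"
    and code: "C \<in> codes q (\<mu> * q) (\<mu> * q\<^sup>2) (\<mu> * q - \<mu>)"
begin

abbreviation agreement :: "nat list \<Rightarrow> nat list \<Rightarrow> nat" where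
  "agreement \<equiv> agreements {0..<\<mu> * q}"

definition meets :: "nat list \<Rightarrow> nat list \<Rightarrow> bool" where
  "meets u v \<longleftrightarrow> (\<exists>i<\<mu> * q. u ! i = v ! i)"

lemma card_code: "card C = \<mu> * q\<^sup>2"
  using code unfolding codes_def by auto

lemma finite_code: "finite C"
  using card_code mu_pos q_ge_2 by (intro card_ge_0_finite) simp

lemma length_codeword: "w \<in> C \<Longrightarrow> length w = \<mu> * q"
  and codeword_nth_less: "w \<in> C \<Longrightarrow> i < \<mu> * q \<Longrightarrow> w ! i < q"
  using code unfolding codes_def words_def by auto

lemma length_pos: "0 < \<mu> * q"
  using mu_pos q_ge_2 by simp

lemma meets_refl: "meets u u"
  unfolding meets_def using length_pos by blast

lemma meets_commute: "meets u v = meets v u"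
  unfolding meets_def by auto

lemma agreement_le:
  assumes "u \<in> C" "v \<in> C" "u \<noteq> v"
  shows "agreement u v \<le> \<mu>"
proof -
  have "\<mu> * q - \<mu> \<le> hamming u v" using code assms unfolding codes_def by auto
  moreover have "\<mu> \<le> \<mu> * q" using q_ge_2 by simp
  ultimately show ?thesis
    using agreements_add_hamming[OF length_codeword[OF assms(1)], of v] by linarith
qed

lemma agreement_shortened:
  assumes "i < \<mu> * q" "u ! i = v ! i"
  shows "agreement u v = agreements ({0..<\<mu> * q} - {i}) u v + 1"
proof -
  have "{j\<in>{0..<\<mu> * q}. u ! j = v ! j} = insert i {j\<in>{0..<\<mu> * q} - {i}. u ! j = v ! j}"
    using assms by auto
  then show ?thesis unfolding agreements_def by simp
qed

lemma plotkin_setting_shortened: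
  assumes "i < \<mu> * q"
  shows "plotkin_setting q (\<mu> - 1) {w\<in>C. w ! i = a} ({0..<\<mu> * q} - {i})"
proof
  show "finite {w\<in>C. w ! i = a}" using finite_code by simp
  show "\<forall>u\<in>{w\<in>C. w ! i = a}. \<forall>j\<in>{0..<\<mu> * q} - {i}. u ! j < q" using codeword_nth_less by auto
  show "\<forall>u\<in>{w\<in>C. w ! i = a}. \<forall>v\<in>{w\<in>C. w ! i = a}. u \<noteq> v \<longrightarrow>
          agreements ({0..<\<mu> * q} - {i}) u v \<le> \<mu> - 1"
    using agreement_le agreement_shortened[OF assms] by fastforce
qed (use q_ge_2 in auto)

lemma plotkin_slack_shortened:
  "plotkin_slack q (\<mu> * q - 1) m (\<mu> - 1) =
     real m * (real \<mu> * real q - real m) * (real q - 1) / real q"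
proof -
  have "real (\<mu> * q - 1) = real \<mu> * real q - 1" using length_pos by (simp add: of_nat_diff)
  moreover have "real (\<mu> - 1) = real \<mu> - 1" using mu_pos by (simp add: of_nat_diff)
  moreover have "real q > 0" using q_ge_2 by simp
  ultimately show ?thesis unfolding plotkin_slack_def by (simp add: field_simps power2_eq_square)
qed

lemma symbol_count_le:
  assumes "i < \<mu> * q"
  shows "symbol_count C i a \<le> \<mu> * q"
proof (rule ccontr)
  let ?m = "symbol_count C i a"
  assume "\<not> ?m \<le> \<mu> * q"
  then have "real (\<mu> * q) < real ?m" by (simp only: of_nat_less_iff not_le)
  then have "real \<mu> * real q - real ?m < 0" "real ?m > 0"
    using of_nat_0_le_iff[of "\<mu> * q"] by (simp, linarith)
  moreover have "real q - 1 > 0" using q_ge_2 by simp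
  ultimately have neg: "real ?m * (real \<mu> * real q - real ?m) * (real q - 1) / real q < 0"
    by (simp add: divide_neg_pos mult_pos_neg mult_neg_pos)
  have m: "card {w\<in>C. w ! i = a} = ?m" and n: "card ({0..<\<mu> * q} - {i}) = \<mu> * q - 1"
    using assms unfolding symbol_count_def by simp_all
  have "0 \<le> plotkin_slack q (card ({0..<\<mu> * q} - {i})) (card {w\<in>C. w ! i = a}) (\<mu> - 1)"
    by (rule plotkin_setting.plotkin_bound[OF plotkin_setting_shortened[OF assms]])
  then have "0 \<le> real ?m * (real \<mu> * real q - real ?m) * (real q - 1) / real q"
    unfolding m n plotkin_slack_shortened .
  with neg show False by linarith
qed

text \<open>The counts are bounded by \<open>\<mu> q\<close> and sum to \<open>|C| = q \<cdot> \<mu> q\<close>.\<close>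

lemma symbol_count_eq:
  assumes "i < \<mu> * q" "a < q"
  shows "symbol_count C i a = \<mu> * q"
proof -
  have "(\<Sum>b<q. symbol_count C i b) = card {..<q} * (\<mu> * q)"
    using sum_symbol_count[of C i q] finite_code codeword_nth_less assms(1) card_code
    by (simp add: power2_eq_square)
  then show ?thesis
    using all_eq_bound_if_sum_eq[of "{..<q}"] symbol_count_le[OF assms(1)] assms(2) by simp
qed

lemma shortened_plotkin_equality:
  assumes "i < \<mu> * q" "a < q"
  shows "\<forall>j\<in>{0..<\<mu> * q} - {i}. \<forall>b<q. real (symbol_count {w\<in>C. w ! i = a} j b) = real \<mu>"
    and "\<forall>u\<in>{w\<in>C. w ! i = a}. \<forall>v\<in>{w\<in>C. w ! i = a}. u \<noteq> v \<longrightarrow>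
           agreements ({0..<\<mu> * q} - {i}) u v = \<mu> - 1"
proof -
  interpret plotkin_setting q "\<mu> - 1" "{w\<in>C. w ! i = a}" "{0..<\<mu> * q} - {i}"
    by (rule plotkin_setting_shortened[OF assms(1)])
  have m: "card {w\<in>C. w ! i = a} = \<mu> * q"
    using symbol_count_eq[OF assms] unfolding symbol_count_def .
  have n: "card ({0..<\<mu> * q} - {i}) = \<mu> * q - 1" using assms(1) by simp
  have "plotkin_slack q (card ({0..<\<mu> * q} - {i})) (card {w\<in>C. w ! i = a}) (\<mu> - 1) = 0"
    unfolding n m plotkin_slack_shortened by simp
  from plotkin_equality[OF this] show
    "\<forall>j\<in>{0..<\<mu> * q} - {i}. \<forall>b<q. real (symbol_count {w\<in>C. w ! i = a} j b) = real \<mu>"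
    "\<forall>u\<in>{w\<in>C. w ! i = a}. \<forall>v\<in>{w\<in>C. w ! i = a}. u \<noteq> v \<longrightarrow>
       agreements ({0..<\<mu> * q} - {i}) u v = \<mu> - 1"
    using q_ge_2 by (simp_all add: m)
qed

lemma pair_count_eq:
  assumes "i < \<mu> * q" "j < \<mu> * q" "i \<noteq> j" "a < q" "b < q"
  shows "card {w\<in>C. w ! i = a \<and> w ! j = b} = \<mu>"
proof -
  have "symbol_count {w\<in>C. w ! i = a} j b = card {w\<in>C. w ! i = a \<and> w ! j = b}"
    unfolding symbol_count_def by (intro arg_cong[where f = card]) auto
  then show ?thesis using shortened_plotkin_equality(1)[OF assms(1,4)] assms(2,3,5) by simp
qed

lemma agreement_eq_mu:
  assumes "u \<in> C" "v \<in> C" "u \<noteq> v" "meets u v"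
  shows "agreement u v = \<mu>"
proof -
  obtain i where i: "i < \<mu> * q" "u ! i = v ! i" using assms(4) unfolding meets_def by auto
  then show ?thesis
    using shortened_plotkin_equality(2)[OF i(1) codeword_nth_less[OF assms(1) i(1)]]
      agreement_shortened[OF i] assms mu_pos by auto
qed

lemma agreement_eq:
  assumes "u \<in> C" "v \<in> C" "u \<noteq> v"
  shows "agreement u v = (if meets u v then \<mu> else 0)"
proof (cases "meets u v")
  case False
  then have "{j\<in>{0..<\<mu> * q}. u ! j = v ! j} = {}" unfolding meets_def by auto
  then show ?thesis using False unfolding agreements_def by simp
qed (use agreement_eq_mu assms in auto)

lemma agreement_eq_sum: "agreement u v = (\<Sum>i\<in>{0..<\<mu> * q}. if u ! i = v ! i then 1 else 0)"
  unfolding agreements_def by (rule card_Collect_eq_sum_indicator) simp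

lemma sum_agreement:
  assumes "c \<in> C"
  shows "(\<Sum>v\<in>C. agreement c v) = (\<mu> * q) * (\<mu> * q)"
proof -
  have "(\<Sum>v\<in>C. agreement c v) = (\<Sum>i\<in>{0..<\<mu> * q}. \<Sum>v\<in>C. if c ! i = v ! i then 1 else 0)"
    unfolding agreement_eq_sum by (rule sum.swap)
  also have "\<dots> = (\<Sum>i\<in>{0..<\<mu> * q}. symbol_count C i (c ! i))"
    unfolding symbol_count_def card_Collect_eq_sum_indicator[OF finite_code]
    by (intro sum.cong refl) auto
  also have "\<dots> = (\<Sum>i\<in>{0..<\<mu> * q}. \<mu> * q)"
    using symbol_count_eq codeword_nth_less[OF assms] by (intro sum.cong) auto
  finally show ?thesis by simp
qed

lemma sum_agreement_products:
  assumes c: "c \<in> C" and d: "d \<in> C"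
  shows "(\<Sum>v\<in>C. agreement c v * agreement d v) = \<mu> * q * agreement c d + (\<mu> * q) * (\<mu> * q - 1) * \<mu>"
proof -
  let ?N = "{0..<\<mu> * q}"
  have "(\<Sum>v\<in>C. agreement c v * agreement d v)
      = (\<Sum>i\<in>?N. \<Sum>j\<in>?N. \<Sum>v\<in>C. (if c ! i = v ! i then 1 else 0) * (if d ! j = v ! j then 1 else 0))"
    unfolding agreement_eq_sum sum_product
    by (subst sum.swap) (intro sum.cong refl, rule sum.swap)
  also have "\<dots> = (\<Sum>i\<in>?N. \<Sum>j\<in>?N. card {v\<in>C. v ! i = c ! i \<and> v ! j = d ! j})"
    unfolding card_Collect_eq_sum_indicator[OF finite_code] by (intro sum.cong refl) auto
  also have "\<dots> = (\<Sum>i\<in>?N. (if c ! i = d ! i then \<mu> * q else 0) + (\<mu> * q - 1) * \<mu>)"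
  proof (intro sum.cong refl)
    fix i assume i: "i \<in> ?N"
    have "card {v\<in>C. v ! i = c ! i \<and> v ! i = d ! i} = (if c ! i = d ! i then \<mu> * q else 0)"
    proof (cases "c ! i = d ! i")
      case True
      then show ?thesis using symbol_count_eq[of i "c ! i"] i codeword_nth_less[OF c, of i]
        unfolding symbol_count_def by simp
    next
      case False
      then have "{v\<in>C. v ! i = c ! i \<and> v ! i = d ! i} = {}" by auto
      with False show ?thesis by (simp only: card.empty if_False)
    qed
    moreover have "(\<Sum>j\<in>?N - {i}. card {v\<in>C. v ! i = c ! i \<and> v ! j = d ! j}) = (\<mu> * q - 1) * \<mu>"
      using i codeword_nth_less[OF c] codeword_nth_less[OF d] by (simp add: pair_count_eq)
    ultimately show "(\<Sum>j\<in>?N. card {v\<in>C. v ! i = c ! i \<and> v ! j = d ! j})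
        = (if c ! i = d ! i then \<mu> * q else 0) + (\<mu> * q - 1) * \<mu>"
      using i by (simp add: sum.remove)
  qed
  also have "\<dots> = \<mu> * q * agreement c d + (\<mu> * q) * (\<mu> * q - 1) * \<mu>"
    unfolding agreements_def by (simp add: sum.distrib sum_if_const_eq_card)
  finally show ?thesis .
qed

lemma card_meeting:
  assumes "c \<in> C"
  shows "card {v\<in>C - {c}. meets c v} = \<mu> * q\<^sup>2 - q"
proof -
  have "(\<Sum>v\<in>C - {c}. agreement c v) = (\<Sum>v\<in>C - {c}. if meets c v then \<mu> else 0)"
    using agreement_eq[OF assms] by (intro sum.cong) auto
  then have "\<mu> * q + \<mu> * card {v\<in>C - {c}. meets c v} = (\<mu> * q) * (\<mu> * q)"
    using sum_agreement[OF assms] sum.remove[OF finite_code assms, of "agreement c"] finite_code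
    by (simp add: agreements_self sum_if_const_eq_card)
  then have "\<mu> * (q + card {v\<in>C - {c}. meets c v}) = \<mu> * (\<mu> * q * q)" by (simp add: algebra_simps)
  then show ?thesis using mu_pos by (simp add: power2_eq_square)
qed

lemma card_not_meeting:
  assumes "c \<in> C"
  shows "card {v\<in>C - {c}. \<not> meets c v} = q - 1"
proof -
  have "card (C - {c}) = card ({v\<in>C - {c}. meets c v} \<union> {v\<in>C - {c}. \<not> meets c v})"
    by (intro arg_cong[where f = card]) auto
  also have "\<dots> = card {v\<in>C - {c}. meets c v} + card {v\<in>C - {c}. \<not> meets c v}"
    using finite_code by (intro card_Un_disjoint) auto
  finally have "card C - 1 = card {v\<in>C - {c}. meets c v} + card {v\<in>C - {c}. \<not> meets c v}"
    using assms finite_code by simp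
  moreover have "q \<le> \<mu> * q\<^sup>2" using mu_pos by (simp add: power2_eq_square)
  ultimately show ?thesis using card_code card_meeting[OF assms] by simp
qed

text \<open>The sums of the agreements with \<open>c\<close>, with \<open>d\<close>, and of their products are known exactly
  (\<open>sum_agreement\<close>, \<open>sum_agreement_products\<close>); they force this sum to vanish.\<close>

lemma sum_centred_agreement_products:
  assumes c: "c \<in> C" and d: "d \<in> C" and "c \<noteq> d" "meets c d"
  shows "(\<Sum>v\<in>C - {c, d}. (int (agreement c v) - \<mu>) * (int (agreement d v) - \<mu>)) = 0"
proof -
  define A where "A v = int (agreement c v)" for v
  define B where "B v = int (agreement d v)" for v
  define m where "m = int \<mu>"
  define n where "n = int (\<mu> * q)"
  have split: "sum f C = f c + f d + sum f (C - {c, d})" for f :: "nat list \<Rightarrow> int"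
    using finite_code c d \<open>c \<noteq> d\<close> sum.remove[OF finite_code c, of f] sum.remove[of "C - {c}" d f]
    by (simp add: Diff_insert2[symmetric] insert_commute)
  have cd: "A c = n" "B d = n" "A d = m" "B c = m"
    using agreement_eq[OF c d] agreement_eq[OF d c] assms(3,4) meets_commute[of c d]
    unfolding A_def B_def m_def n_def by (simp_all add: agreements_self)
  have "sum A C = n * n" "sum B C = n * n"
    using sum_agreement[OF c] sum_agreement[OF d]
    unfolding A_def B_def n_def by (simp_all flip: of_nat_sum)
  then have AB: "sum A (C - {c, d}) = n * n - n - m" "sum B (C - {c, d}) = n * n - n - m"
    using split[of A] split[of B] cd by simp_all
  have "int (\<Sum>v\<in>C. agreement c v * agreement d v) = (\<Sum>v\<in>C. A v * B v)"
    unfolding A_def B_def by simp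
  then have "(\<Sum>v\<in>C. A v * B v) = n * m + n * (n - 1) * m"
    using sum_agreement_products[OF c d] agreement_eq[OF c d] assms(3,4) length_pos
    unfolding m_def n_def by (simp add: of_nat_diff)
  then have AB_rest: "(\<Sum>v\<in>C - {c, d}. A v * B v) = n * m + n * (n - 1) * m - 2 * n * m"
    using split[of "\<lambda>v. A v * B v"] cd by simp
  have card_rest: "int (card (C - {c, d})) = n * q - 2"
  proof -
    have "2 \<le> card C" using card_mono[OF finite_code, of "{c, d}"] c d assms(3) by simp
    then show ?thesis using c d assms(3) finite_code card_code
      by (simp add: card_Diff_subset of_nat_diff power2_eq_square n_def)
  qed
  have "(\<Sum>v\<in>C - {c, d}. (A v - m) * (B v - m))
      = (\<Sum>v\<in>C - {c, d}. A v * B v) - m * sum A (C - {c, d}) - m * sum B (C - {c, d})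
        + m * m * int (card (C - {c, d}))"
    by (simp add: algebra_simps sum.distrib sum_subtractf sum_distrib_left)
  also have "\<dots> = (n * m + n * (n - 1) * m - 2 * n * m) - m * (n * n - n - m) - m * (n * n - n - m)
        + m * m * (n * q - 2)"
    unfolding AB_rest AB card_rest ..
  also have "\<dots> = 0" unfolding n_def m_def by (simp add: algebra_simps)
  finally have "(\<Sum>v\<in>C - {c, d}. (A v - m) * (B v - m)) = 0" .
  then show ?thesis unfolding A_def B_def m_def .
qed

text \<open>Every summand above is nonnegative since agreements are \<open>0\<close> or \<open>\<mu>\<close>, but a word \<open>e\<close>
  meeting neither \<open>c\<close> nor \<open>d\<close> would contribute \<open>\<mu>\<^sup>2\<close>.\<close>

lemma not_meets_trans:
  assumes c: "c \<in> C" and d: "d \<in> C" and e: "e \<in> C"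
    and "\<not> meets c e" "\<not> meets e d" "c \<noteq> d"
  shows "\<not> meets c d"
proof
  assume "meets c d"
  have e_other: "e \<in> C - {c, d}" using assms meets_refl meets_commute by blast
  have "\<forall>v\<in>C - {c, d}. 0 \<le> (int (agreement c v) - \<mu>) * (int (agreement d v) - \<mu>)"
  proof
    fix v assume "v \<in> C - {c, d}"
    then show "0 \<le> (int (agreement c v) - \<mu>) * (int (agreement d v) - \<mu>)"
      using agreement_eq[OF c, of v] agreement_eq[OF d, of v]
      by (cases "meets c v"; cases "meets d v") auto
  qed
  then have "(int (agreement c e) - \<mu>) * (int (agreement d e) - \<mu>) \<le> 0"
    using sum_centred_agreement_products[OF c d \<open>c \<noteq> d\<close> \<open>meets c d\<close>]
      member_le_sum[OF e_other, of "\<lambda>v. (int (agreement c v) - \<mu>) * (int (agreement d v) - \<mu>)"]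
      finite_code by simp
  moreover have "agreement c e = 0" "agreement d e = 0"
    using agreement_eq[OF c e] agreement_eq[OF d e] assms(4,5) e_other meets_commute[of e d] by auto
  ultimately show False using mu_pos by (simp add: mult_le_0_iff)
qed

definition parallel_class :: "nat list \<Rightarrow> nat list set" where
  "parallel_class c = {v\<in>C. v = c \<or> \<not> meets c v}"

lemma parallel_class_self: "c \<in> C \<Longrightarrow> c \<in> parallel_class c"
  unfolding parallel_class_def by auto

lemma parallel_class_subset: "parallel_class c \<subseteq> C"
  unfolding parallel_class_def by auto

lemma card_parallel_class:
  assumes "c \<in> C"
  shows "card (parallel_class c) = q"
proof -
  have "parallel_class c = insert c {v\<in>C - {c}. \<not> meets c v}"
    unfolding parallel_class_def using assms by auto
  then show ?thesis using card_not_meeting[OF assms] finite_code q_ge_2 by simp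
qed

lemma parallel_class_eq:
  assumes "c \<in> C" "d \<in> parallel_class c"
  shows "parallel_class d = parallel_class c"
proof -
  have sub: "parallel_class y \<subseteq> parallel_class x" if "x \<in> C" "y \<in> parallel_class x" for x y
    using that not_meets_trans[of x _ y] meets_commute
    unfolding parallel_class_def by auto
  have "c \<in> parallel_class d" using assms meets_commute unfolding parallel_class_def by auto
  then show ?thesis
    using sub[OF assms] sub[of d c] assms parallel_class_subset by blast
qed

end

lemma card_filter_bij_betw:
  assumes "bij_betw h X C"
  shows "card {x\<in>X. P (h x)} = card {w\<in>C. P w}"
proof -
  have "h ` {x\<in>X. P (h x)} = {w\<in>C. P w}" using assms unfolding bij_betw_def by auto
  moreover have "inj_on h {x\<in>X. P (h x)}"
    using assms unfolding bij_betw_def by (auto intro: inj_on_subset)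
  ultimately show ?thesis by (metis card_image)
qed

lemma card_partition_on_const:
  assumes "partition_on A P" "finite A" "\<forall>p\<in>P. card p = k"
  shows "card A = card P * k"
proof -
  have "finite p" if "p \<in> P" for p
    using assms(1,2) that unfolding partition_on_def by (meson Union_upper finite_subset)
  then show ?thesis using product_partition[OF assms(1)] assms(3) by simp
qed

definition coord_block :: "(nat \<Rightarrow> nat list) \<Rightarrow> nat set \<Rightarrow> nat \<times> nat \<Rightarrow> nat set" where
  "coord_block h X p = {x\<in>X. h x ! fst p = snd p}"

lemma coord_block_Pair: "coord_block h X (i, a) = {x\<in>X. h x ! i = a}"
  unfolding coord_block_def by simp

lemma coord_block_subset: "coord_block h X p \<subseteq> X"
  unfolding coord_block_def by auto

definition coord_blocks :: "nat \<Rightarrow> nat \<Rightarrow> (nat \<Rightarrow> nat list) \<Rightarrow> nat set \<Rightarrow> nat set set" where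
  "coord_blocks n q h X = coord_block h X ` ({0..<n} \<times> {0..<q})"

definition is_code_net :: "nat \<Rightarrow> nat \<Rightarrow> nat set \<times> nat set set \<Rightarrow> nat list set \<Rightarrow> bool" where
  "is_code_net n q N C \<longleftrightarrow> (\<exists>h. bij_betw h (fst N) C \<and> snd N = coord_blocks n q h (fst N))"

locale extremal_code_points = extremal_code +
  fixes X :: "nat set" and h :: "nat \<Rightarrow> nat list"
  assumes h_bij: "bij_betw h X C"
begin

lemma h_in_code: "x \<in> X \<Longrightarrow> h x \<in> C"
  using h_bij unfolding bij_betw_def by auto

lemma finite_points: "finite X"
  using h_bij finite_code bij_betw_finite by blast

lemma card_points: "card X = \<mu> * q\<^sup>2"
  using h_bij card_code bij_betw_same_card by metis

lemma card_coord_block: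
  assumes "i < \<mu> * q" "a < q"
  shows "card (coord_block h X (i, a)) = \<mu> * q"
  using card_filter_bij_betw[OF h_bij, of "\<lambda>w. w ! i = a"] symbol_count_eq[OF assms]
  unfolding symbol_count_def coord_block_Pair by simp

lemma card_coord_block_Int:
  assumes "i < \<mu> * q" "j < \<mu> * q" "i \<noteq> j" "a < q" "b < q"
  shows "card (coord_block h X (i, a) \<inter> coord_block h X (j, b)) = \<mu>"
proof -
  have "coord_block h X (i, a) \<inter> coord_block h X (j, b) = {x\<in>X. h x ! i = a \<and> h x ! j = b}"
    unfolding coord_block_Pair by auto
  then show ?thesis
    using card_filter_bij_betw[OF h_bij, of "\<lambda>w. w ! i = a \<and> w ! j = b"] pair_count_eq[OF assms]
    by simp
qed

lemma coord_block_nonempty: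
  assumes "i < \<mu> * q" "a < q"
  shows "coord_block h X (i, a) \<noteq> {}"
  using card_coord_block[OF assms] length_pos by (metis card.empty less_numeral_extra(3))

lemma coord_block_inj:
  assumes "p \<in> {0..<\<mu> * q} \<times> {0..<q}" "p' \<in> {0..<\<mu> * q} \<times> {0..<q}"
    and "coord_block h X p = coord_block h X p'"
  shows "p = p'"
proof -
  obtain i a j b where p: "p = (i, a)" "p' = (j, b)" by (cases p, cases p')
  show ?thesis
  proof (cases "i = j")
    case True
    show ?thesis
    proof (rule ccontr)
      assume "p \<noteq> p'"
      then have "coord_block h X (i, a) \<inter> coord_block h X (j, b) = {}"
        using True p unfolding coord_block_Pair by auto
      then show False using assms coord_block_nonempty p by auto
    qed
  next
    case False
    then have "\<mu> = \<mu> * q"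
      using card_coord_block_Int[of i j a b] card_coord_block[of i a] assms p by auto
    then show ?thesis using mu_pos q_ge_2 by simp
  qed
qed

lemma inj_on_coord_block: "inj_on (coord_block h X) ({0..<\<mu> * q} \<times> {0..<q})"
  using coord_block_inj by (intro inj_onI)

lemma coord_block_Int_eq_empty_iff:
  assumes "p \<in> {0..<\<mu> * q} \<times> {0..<q}" "p' \<in> {0..<\<mu> * q} \<times> {0..<q}" "p \<noteq> p'"
  shows "coord_block h X p \<inter> coord_block h X p' = {} \<longleftrightarrow> fst p = fst p'"
proof -
  obtain i a j b where p: "p = (i, a)" "p' = (j, b)" by (cases p, cases p')
  show ?thesis
  proof (cases "i = j")
    case True
    then show ?thesis using p assms(3) by (auto simp: coord_block_Pair)
  next
    case False
    then show ?thesis using card_coord_block_Int[of i j a b] assms p mu_pos by auto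
  qed
qed

lemma card_blocks_through:
  assumes "x \<in> X" "y \<in> X"
  shows "card {b\<in>coord_blocks (\<mu> * q) q h X. x \<in> b \<and> y \<in> b} = agreement (h x) (h y)"
proof -
  let ?K = "{i\<in>{0..<\<mu> * q}. h x ! i = h y ! i}"
  let ?p = "\<lambda>i. (i, h x ! i)"
  have sub: "?p ` ?K \<subseteq> {0..<\<mu> * q} \<times> {0..<q}"
    using codeword_nth_less[OF h_in_code[OF assms(1)]] codeword_nth_less[OF h_in_code[OF assms(2)]]
    by auto
  have "{b\<in>coord_blocks (\<mu> * q) q h X. x \<in> b \<and> y \<in> b} = coord_block h X ` ?p ` ?K"
  proof (intro equalityI subsetI)
    fix b assume "b \<in> {b\<in>coord_blocks (\<mu> * q) q h X. x \<in> b \<and> y \<in> b}"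
    then obtain i a where "i < \<mu> * q" "b = coord_block h X (i, a)" "x \<in> b" "y \<in> b"
      unfolding coord_blocks_def by auto
    then show "b \<in> coord_block h X ` ?p ` ?K" by (auto simp: coord_block_Pair intro!: image_eqI)
  next
    fix b assume "b \<in> coord_block h X ` ?p ` ?K"
    then show "b \<in> {b\<in>coord_blocks (\<mu> * q) q h X. x \<in> b \<and> y \<in> b}"
      using sub assms unfolding coord_blocks_def by (auto simp: coord_block_Pair)
  qed
  then have "card {b\<in>coord_blocks (\<mu> * q) q h X. x \<in> b \<and> y \<in> b} = card (?p ` ?K)"
    using card_image[OF inj_on_subset[OF inj_on_coord_block sub]] by simp
  also have "\<dots> = card ?K" by (rule card_image) (auto intro: inj_onI)
  finally show ?thesis unfolding agreements_def .
qed

definition block_class :: "nat \<Rightarrow> nat set set" where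
  "block_class i = (\<lambda>a. coord_block h X (i, a)) ` {0..<q}"

lemma partition_on_block_class:
  assumes "i < \<mu> * q"
  shows "partition_on X (block_class i)"
proof (rule partition_onI)
  show "\<Union>(block_class i) = X"
  proof (intro equalityI subsetI)
    fix x assume x: "x \<in> X"
    have "h x ! i < q" by (rule codeword_nth_less[OF h_in_code[OF x] assms])
    then show "x \<in> \<Union>(block_class i)" using x unfolding block_class_def coord_block_Pair by auto
  qed (auto simp: block_class_def coord_block_Pair)
  show "disjnt p p'" if "p \<in> block_class i" "p' \<in> block_class i" "p \<noteq> p'" for p p'
    using that unfolding block_class_def disjnt_def coord_block_Pair by auto
  show "{} \<notin> block_class i"
  proof
    assume "{} \<in> block_class i"
    then obtain a where "a < q" "coord_block h X (i, a) = {}" unfolding block_class_def by auto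
    then show False using coord_block_nonempty[OF assms] by blast
  qed
qed

lemma block_class_inj:
  assumes "i < \<mu> * q" "j < \<mu> * q" "block_class i = block_class j"
  shows "i = j"
proof -
  have "coord_block h X (i, 0) \<in> block_class i"
    using q_ge_2 unfolding block_class_def by auto
  then have "coord_block h X (i, 0) \<in> block_class j" using assms(3) by simp
  then obtain b where "b < q" "coord_block h X (i, 0) = coord_block h X (j, b)"
    unfolding block_class_def by auto
  then show ?thesis using coord_block_inj[of "(i, 0)" "(j, b)"] assms q_ge_2 by auto
qed

lemma block_parallel_classes:
  "\<exists>PB. partition_on (coord_blocks (\<mu> * q) q h X) PB \<and> finite PB \<and> card PB = \<mu> * q \<and>
     (\<forall>c\<in>PB. partition_on X c) \<and>
     (\<forall>c\<in>PB. \<forall>c'\<in>PB. c \<noteq> c' \<longrightarrow> (\<forall>b\<in>c. \<forall>b'\<in>c'. card (b \<inter> b') = \<mu>))"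
proof (intro exI[of _ "block_class ` {0..<\<mu> * q}"] conjI ballI impI)
  show "partition_on (coord_blocks (\<mu> * q) q h X) (block_class ` {0..<\<mu> * q})"
  proof (rule partition_onI)
    show "\<Union>(block_class ` {0..<\<mu> * q}) = coord_blocks (\<mu> * q) q h X"
      unfolding block_class_def coord_blocks_def by auto
    show "disjnt c c'"
      if c: "c \<in> block_class ` {0..<\<mu> * q}" and c': "c' \<in> block_class ` {0..<\<mu> * q}" and "c \<noteq> c'"
      for c c'
    proof -
      obtain i j where "i < \<mu> * q" "j < \<mu> * q" "c = block_class i" "c' = block_class j"
        using c c' by auto
      moreover have "i \<noteq> j" using \<open>c \<noteq> c'\<close> calculation by auto
      ultimately show ?thesis
        using coord_block_inj unfolding block_class_def disjnt_def by auto
    qed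
    show "{} \<notin> block_class ` {0..<\<mu> * q}" unfolding block_class_def using q_ge_2 by auto
  qed
  show "card (block_class ` {0..<\<mu> * q}) = \<mu> * q"
    using block_class_inj by (subst card_image) (auto intro: inj_onI)
  show "partition_on X c" if "c \<in> block_class ` {0..<\<mu> * q}" for c
    using that partition_on_block_class by auto
  show "card (b \<inter> b') = \<mu>"
    if c: "c \<in> block_class ` {0..<\<mu> * q}" and c': "c' \<in> block_class ` {0..<\<mu> * q}"
      and "c \<noteq> c'" and b: "b \<in> c" and b': "b' \<in> c'"
    for c c' b b'
  proof -
    obtain i j a a' where "i < \<mu> * q" "j < \<mu> * q" "a < q" "a' < q"
      "c = block_class i" "c' = block_class j"
      "b = coord_block h X (i, a)" "b' = coord_block h X (j, a')"
      using c c' b b' unfolding block_class_def by auto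
    moreover have "i \<noteq> j" using \<open>c \<noteq> c'\<close> calculation by auto
    ultimately show ?thesis using card_coord_block_Int by simp
  qed
qed simp

definition point_class :: "nat \<Rightarrow> nat set" where
  "point_class x = {y\<in>X. h y \<in> parallel_class (h x)}"

lemma point_class_self: "x \<in> X \<Longrightarrow> x \<in> point_class x"
  unfolding point_class_def using parallel_class_self[OF h_in_code] by simp

lemma point_class_eq:
  assumes "x \<in> X" "y \<in> point_class x"
  shows "point_class y = point_class x"
proof -
  have "h y \<in> parallel_class (h x)" using assms(2) unfolding point_class_def by simp
  then have "parallel_class (h y) = parallel_class (h x)"
    by (rule parallel_class_eq[OF h_in_code[OF assms(1)]])
  then show ?thesis unfolding point_class_def by simp
qed

lemma card_point_class:
  assumes "x \<in> X"
  shows "card (point_class x) = q"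
proof -
  have "card (point_class x) = card {w\<in>C. w \<in> parallel_class (h x)}"
    unfolding point_class_def by (rule card_filter_bij_betw[OF h_bij])
  also have "{w\<in>C. w \<in> parallel_class (h x)} = parallel_class (h x)"
    using parallel_class_subset by blast
  finally show ?thesis using card_parallel_class[OF h_in_code[OF assms]] by simp
qed

lemma partition_on_point_class: "partition_on X (point_class ` X)"
proof (rule partition_onI)
  show "\<Union>(point_class ` X) = X"
  proof (intro equalityI subsetI)
    fix y assume "y \<in> \<Union>(point_class ` X)"
    then show "y \<in> X" unfolding point_class_def by blast
  qed (use point_class_self in blast)
  show "disjnt p p'" if p: "p \<in> point_class ` X" and p': "p' \<in> point_class ` X"
    and "p \<noteq> p'" for p p'
  proof -
    obtain x x' where x: "x \<in> X" "p = point_class x" and x': "x' \<in> X" "p' = point_class x'"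
      using p p' by blast
    show ?thesis unfolding disjnt_def
    proof (rule ccontr)
      assume "p \<inter> p' \<noteq> {}"
      then obtain y where y: "y \<in> point_class x" "y \<in> point_class x'" using x x' by blast
      have "point_class x = point_class y" using point_class_eq[OF x(1) y(1)] by simp
      also have "\<dots> = point_class x'" by (rule point_class_eq[OF x'(1) y(2)])
      finally have "p = p'" using x x' by simp
      then show False using \<open>p \<noteq> p'\<close> by simp
    qed
  qed
  show "{} \<notin> point_class ` X" using point_class_self by auto
qed

lemma card_blocks_through_point_classes:
  assumes "x \<in> X" "y \<in> X"
  shows "card {b\<in>coord_blocks (\<mu> * q) q h X. x \<in> b \<and> y \<in> b} =
           (if point_class x = point_class y then (if x = y then \<mu> * q else 0) else \<mu>)"
proof -
  have hxy: "h x = h y \<longleftrightarrow> x = y" using h_bij assms unfolding bij_betw_def inj_on_def by auto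
  have "point_class x = point_class y \<longleftrightarrow> y \<in> point_class x"
    using point_class_eq[OF assms(1), of y] point_class_self[OF assms(2)] by auto
  then have "point_class x = point_class y \<longleftrightarrow> h x = h y \<or> \<not> meets (h x) (h y)"
    using assms(2) h_in_code[OF assms(2)] unfolding point_class_def parallel_class_def by auto
  then show ?thesis
    unfolding card_blocks_through[OF assms]
    using agreement_eq[OF h_in_code[OF assms(1)] h_in_code[OF assms(2)]] hxy
    by (auto simp: agreements_self)
qed

lemma point_parallel_classes:
  "\<exists>PX. partition_on X PX \<and> finite PX \<and> card PX = \<mu> * q \<and> (\<forall>P\<in>PX. card P = q) \<and>
     (\<forall>P\<in>PX. \<forall>P'\<in>PX. \<forall>x\<in>P. \<forall>y\<in>P'.
        (P \<noteq> P' \<longrightarrow> card {b\<in>coord_blocks (\<mu> * q) q h X. x \<in> b \<and> y \<in> b} = \<mu>) \<and>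
        (P = P' \<and> x \<noteq> y \<longrightarrow> card {b\<in>coord_blocks (\<mu> * q) q h X. x \<in> b \<and> y \<in> b} = 0))"
proof (intro exI[of _ "point_class ` X"] conjI)
  show "partition_on X (point_class ` X)" by (rule partition_on_point_class)
  show "finite (point_class ` X)" using finite_points by simp
  have "card X = card (point_class ` X) * q"
    using card_partition_on_const[OF partition_on_point_class finite_points] card_point_class
    by auto
  then show "card (point_class ` X) = \<mu> * q"
    using card_points q_ge_2 by (simp add: power2_eq_square)
  show "\<forall>P\<in>point_class ` X. card P = q" using card_point_class by auto
  have class_of: "P = point_class x \<and> x \<in> X" if P: "P \<in> point_class ` X" and x: "x \<in> P" for P x
  proof -
    obtain z where "z \<in> X" "P = point_class z" using P by blast
    moreover have "x \<in> X" using x calculation unfolding point_class_def by simp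
    ultimately show ?thesis using point_class_eq[of z x] x by simp
  qed
  show "\<forall>P\<in>point_class ` X. \<forall>P'\<in>point_class ` X. \<forall>x\<in>P. \<forall>y\<in>P'.
        (P \<noteq> P' \<longrightarrow> card {b\<in>coord_blocks (\<mu> * q) q h X. x \<in> b \<and> y \<in> b} = \<mu>) \<and>
        (P = P' \<and> x \<noteq> y \<longrightarrow> card {b\<in>coord_blocks (\<mu> * q) q h X. x \<in> b \<and> y \<in> b} = 0)"
  proof (intro ballI)
    fix P P' x y assume "P \<in> point_class ` X" "P' \<in> point_class ` X" "x \<in> P" "y \<in> P'"
    then have "P = point_class x" "x \<in> X" "P' = point_class y" "y \<in> X" using class_of by blast+
    then show "(P \<noteq> P' \<longrightarrow> card {b\<in>coord_blocks (\<mu> * q) q h X. x \<in> b \<and> y \<in> b} = \<mu>) \<and>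
        (P = P' \<and> x \<noteq> y \<longrightarrow> card {b\<in>coord_blocks (\<mu> * q) q h X. x \<in> b \<and> y \<in> b} = 0)"
      using card_blocks_through_point_classes[of x y] by simp
  qed
qed

theorem symmetric_net_coord_blocks: "symmetric_net \<mu> q X (coord_blocks (\<mu> * q) q h X)"
  unfolding symmetric_net_def
proof (intro conjI)
  show "\<forall>b\<in>coord_blocks (\<mu> * q) q h X. b \<subseteq> X \<and> card b = \<mu> * q"
    using card_coord_block unfolding coord_blocks_def by (auto simp: coord_block_def)
qed (use finite_points card_points block_parallel_classes point_parallel_classes in \<open>blast+\<close>)

end

locale labelled_net =
  fixes \<mu> q :: nat and X :: "nat set" and B :: "nat set set" and PB :: "nat set set set"
    and PX :: "nat set set" and cls :: "nat \<Rightarrow> nat set set" and blk :: "nat \<Rightarrow> nat \<Rightarrow> nat set"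
  assumes mu_pos: "0 < \<mu>" and q_ge_2: "2 \<le> q" and card_points: "card X = \<mu> * q\<^sup>2"
    and blocks: "\<forall>b\<in>B. b \<subseteq> X \<and> card b = \<mu> * q"
    and partition_blocks: "partition_on B PB"
    and partition_points: "\<forall>c\<in>PB. partition_on X c"
    and partition_point_classes: "partition_on X PX"
    and blocks_through: "\<forall>P\<in>PX. \<forall>P'\<in>PX. \<forall>x\<in>P. \<forall>y\<in>P'.
            (P \<noteq> P' \<longrightarrow> card {b\<in>B. x \<in> b \<and> y \<in> b} = \<mu>) \<and>
            (P = P' \<and> x \<noteq> y \<longrightarrow> card {b\<in>B. x \<in> b \<and> y \<in> b} = 0)"
    and cls_bij: "bij_betw cls {0..<\<mu> * q} PB"
    and blk_bij: "\<forall>i<\<mu> * q. bij_betw (blk i) {0..<q} (cls i)"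
begin

definition word :: "nat \<Rightarrow> nat list" where
  "word x = map (\<lambda>i. THE a. a < q \<and> x \<in> blk i a) [0..<\<mu> * q]"

lemma cls_in: "i < \<mu> * q \<Longrightarrow> cls i \<in> PB"
  using cls_bij unfolding bij_betw_def by auto

lemma blk_image: "i < \<mu> * q \<Longrightarrow> blk i ` {0..<q} = cls i"
  using blk_bij unfolding bij_betw_def by blast

lemma inj_on_blk: "i < \<mu> * q \<Longrightarrow> inj_on (blk i) {0..<q}"
  using blk_bij unfolding bij_betw_def by blast

lemma blk_in_cls: "i < \<mu> * q \<Longrightarrow> a < q \<Longrightarrow> blk i a \<in> cls i"
  using blk_image by fastforce

lemma blk_in_blocks: "i < \<mu> * q \<Longrightarrow> a < q \<Longrightarrow> blk i a \<in> B"
  using partition_onD1[OF partition_blocks] blk_in_cls cls_in by blast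

lemma blk_inj:
  assumes "i < \<mu> * q" "j < \<mu> * q" "a < q" "b < q" "blk i a = blk j b"
  shows "i = j \<and> a = b"
proof -
  have "blk i a \<in> cls i \<inter> cls j"
    using blk_in_cls[OF assms(1,3)] blk_in_cls[OF assms(2,4)] assms(5) by auto
  then have "cls i = cls j"
    using partition_blocks cls_in assms(1,2) unfolding partition_on_def disjoint_def by blast
  then have "i = j" using inj_onD[OF bij_betw_imp_inj_on[OF cls_bij]] assms(1,2) by simp
  moreover have "a = b" using inj_onD[OF inj_on_blk[OF assms(1)], of a b] assms calculation by simp
  ultimately show ?thesis by simp
qed

lemma ex1_blk:
  assumes "x \<in> X" "i < \<mu> * q"
  shows "\<exists>!a. a < q \<and> x \<in> blk i a"
proof -
  have part: "partition_on X (cls i)" using partition_points cls_in[OF assms(2)] by auto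
  then obtain b where "b \<in> cls i" "x \<in> b" using assms(1) unfolding partition_on_def by auto
  then obtain a where a: "a < q" "x \<in> blk i a" using blk_image[OF assms(2), symmetric] by auto
  show ?thesis
  proof (rule ex1I[of _ a])
    fix a' assume a': "a' < q \<and> x \<in> blk i a'"
    show "a' = a"
    proof (rule ccontr)
      assume "a' \<noteq> a"
      then have "blk i a' \<noteq> blk i a" using blk_inj[OF assms(2) assms(2)] a a' by blast
      then have "blk i a' \<inter> blk i a = {}"
        using part blk_in_cls assms(2) a a' unfolding partition_on_def disjoint_def by blast
      then show False using a a' by auto
    qed
  qed (use a in simp)
qed

lemma length_word: "length (word x) = \<mu> * q"
  unfolding word_def by simp

lemma word_nth:
  assumes "x \<in> X" "i < \<mu> * q"
  shows "word x ! i < q" and "x \<in> blk i (word x ! i)"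
proof -
  have "word x ! i = (THE a. a < q \<and> x \<in> blk i a)" unfolding word_def using assms(2) by simp
  then show "word x ! i < q" "x \<in> blk i (word x ! i)" using theI'[OF ex1_blk[OF assms]] by simp_all
qed

lemma word_nth_eq_iff:
  assumes "x \<in> X" "i < \<mu> * q" "a < q"
  shows "word x ! i = a \<longleftrightarrow> x \<in> blk i a"
  using ex1_blk[OF assms(1,2)] word_nth[OF assms(1,2)] assms(3) by blast

lemma coord_block_word:
  assumes "i < \<mu> * q" "a < q"
  shows "coord_block word X (i, a) = blk i a"
  unfolding coord_block_Pair
  using word_nth_eq_iff[OF _ assms] blocks blk_in_blocks[OF assms] by blast

lemma blocks_eq_coord_blocks: "B = coord_blocks (\<mu> * q) q word X"
proof
  show "B \<subseteq> coord_blocks (\<mu> * q) q word X"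
  proof
    fix b assume "b \<in> B"
    then obtain c where "c \<in> PB" "b \<in> c" using partition_blocks unfolding partition_on_def by auto
    then obtain i where i: "i < \<mu> * q" "b \<in> cls i" using cls_bij unfolding bij_betw_def by auto
    then obtain a where "a < q" "b = blk i a" using blk_image[OF i(1), symmetric] by auto
    then show "b \<in> coord_blocks (\<mu> * q) q word X"
      using coord_block_word[of i a] i
      unfolding coord_blocks_def by (intro image_eqI[of _ _ "(i, a)"]) auto
  qed
  show "coord_blocks (\<mu> * q) q word X \<subseteq> B"
    using coord_block_word blk_in_blocks unfolding coord_blocks_def by auto
qed

lemma agreements_word:
  assumes "x \<in> X" "y \<in> X"
  shows "agreements {0..<\<mu> * q} (word x) (word y) = card {b\<in>B. x \<in> b \<and> y \<in> b}"
proof -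
  let ?K = "{i\<in>{0..<\<mu> * q}. word x ! i = word y ! i}"
  let ?b = "\<lambda>i. blk i (word x ! i)"
  have "?b ` ?K = {b\<in>B. x \<in> b \<and> y \<in> b}"
  proof (intro equalityI subsetI)
    fix b assume "b \<in> ?b ` ?K"
    then obtain i where i: "i < \<mu> * q" "word x ! i = word y ! i" and b: "b = ?b i" by auto
    have "x \<in> ?b i" "y \<in> ?b i"
      using word_nth(2)[OF assms(1) i(1)] word_nth(2)[OF assms(2) i(1)] i(2) by simp_all
    moreover have "?b i \<in> B" using blk_in_blocks[OF i(1) word_nth(1)[OF assms(1) i(1)]] .
    ultimately show "b \<in> {b\<in>B. x \<in> b \<and> y \<in> b}" using b by simp
  next
    fix b assume b: "b \<in> {b\<in>B. x \<in> b \<and> y \<in> b}"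
    then have "b \<in> coord_blocks (\<mu> * q) q word X" using blocks_eq_coord_blocks by blast
    then obtain i a where ia: "i < \<mu> * q" "a < q" "b = blk i a"
      using coord_block_word unfolding coord_blocks_def by auto
    then have "word x ! i = a" "word y ! i = a"
      using word_nth_eq_iff[OF assms(1) ia(1,2)] word_nth_eq_iff[OF assms(2) ia(1,2)] b by auto
    then show "b \<in> ?b ` ?K" using ia by (intro image_eqI[where x = i]) auto
  qed
  moreover have "inj_on ?b ?K"
  proof (rule inj_onI)
    fix i j assume "i \<in> ?K" "j \<in> ?K" "?b i = ?b j"
    then show "i = j"
      using blk_inj[OF _ _ word_nth(1)[OF assms(1)] word_nth(1)[OF assms(1)], of i j] by auto
  qed
  ultimately show ?thesis unfolding agreements_def using card_image by fastforce
qed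

lemma agreements_word_le:
  assumes "x \<in> X" "y \<in> X" "x \<noteq> y"
  shows "agreements {0..<\<mu> * q} (word x) (word y) \<le> \<mu>"
proof -
  obtain P P' where "P \<in> PX" "P' \<in> PX" "x \<in> P" "y \<in> P'"
    using partition_point_classes assms unfolding partition_on_def by auto
  then have "card {b\<in>B. x \<in> b \<and> y \<in> b} \<le> \<mu>"
    using blocks_through assms(3) by (cases "P = P'") auto
  then show ?thesis using agreements_word[OF assms(1,2)] by simp
qed

lemma inj_on_word: "inj_on word X"
proof (rule inj_onI)
  fix x y assume "x \<in> X" "y \<in> X" "word x = word y"
  show "x = y"
  proof (rule ccontr)
    assume "x \<noteq> y"
    then have "agreements {0..<\<mu> * q} (word x) (word y) \<le> \<mu>"
      using agreements_word_le \<open>x \<in> X\<close> \<open>y \<in> X\<close> by blast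
    then have "\<mu> * q \<le> \<mu> * 1" using \<open>word x = word y\<close> agreements_self[of "{0..<\<mu> * q}"] by simp
    then show False using mu_pos q_ge_2 by simp
  qed
qed

lemma word_code: "word ` X \<in> codes q (\<mu> * q) (\<mu> * q\<^sup>2) (\<mu> * q - \<mu>)"
  unfolding codes_def
proof (intro CollectI conjI ballI impI)
  show "word ` X \<subseteq> words q (\<mu> * q)" unfolding words_def using word_nth(1) length_word by auto
  show "card (word ` X) = \<mu> * q\<^sup>2" using card_image[OF inj_on_word] card_points by simp
  fix u v assume "u \<in> word ` X" "v \<in> word ` X" "u \<noteq> v"
  then obtain x y where "x \<in> X" "y \<in> X" "x \<noteq> y" "u = word x" "v = word y" by auto
  then show "\<mu> * q - \<mu> \<le> hamming u v"
    using agreements_word_le[of x y] agreements_add_hamming[OF length_word, of x v] by simp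
qed

lemma is_code_net_word: "is_code_net (\<mu> * q) q (X, B) (word ` X)"
  unfolding is_code_net_def using inj_on_word blocks_eq_coord_blocks by (auto simp: bij_betw_def)

end

lemma symmetric_net_labelling:
  assumes "0 < \<mu>" "2 \<le> q" and net: "symmetric_net \<mu> q X B"
  obtains PB PX cls blk where "labelled_net \<mu> q X B PB PX cls blk"
proof -
  obtain PB PX where finite_points: "finite X" and card_points: "card X = \<mu> * q\<^sup>2"
    and blocks: "\<forall>b\<in>B. b \<subseteq> X \<and> card b = \<mu> * q"
    and PB: "partition_on B PB" "finite PB" "card PB = \<mu> * q" "\<forall>c\<in>PB. partition_on X c"
    and PX: "partition_on X PX"
      "\<forall>P\<in>PX. \<forall>P'\<in>PX. \<forall>x\<in>P. \<forall>y\<in>P'.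
            (P \<noteq> P' \<longrightarrow> card {b\<in>B. x \<in> b \<and> y \<in> b} = \<mu>) \<and>
            (P = P' \<and> x \<noteq> y \<longrightarrow> card {b\<in>B. x \<in> b \<and> y \<in> b} = 0)"
    using net unfolding symmetric_net_def by (elim conjE exE) (rule that; assumption)
  obtain cls where cls: "bij_betw cls {0..<\<mu> * q} PB"
    using ex_bij_betw_nat_finite[OF PB(2)] unfolding PB(3) by blast
  have "card c = q" if "c \<in> PB" for c
  proof -
    have "\<forall>b\<in>c. card b = \<mu> * q" using blocks PB(1) that unfolding partition_on_def by blast
    then have "card X = card c * (\<mu> * q)"
      using card_partition_on_const[OF _ finite_points] PB(4) that by simp
    then show "card c = q" using card_points assms(1,2) by (simp add: power2_eq_square)
  qed
  have "\<forall>i\<in>{..<\<mu> * q}. \<exists>f. bij_betw f {0..<q} (cls i)"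
  proof
    fix i assume "i \<in> {..<\<mu> * q}"
    have "cls i \<in> PB" using cls \<open>i \<in> {..<\<mu> * q}\<close> unfolding bij_betw_def by auto
    then have "card (cls i) = q" using \<open>\<And>c. c \<in> PB \<Longrightarrow> card c = q\<close> by blast
    moreover have "finite (cls i)" using calculation assms(2) by (intro card_ge_0_finite) simp
    ultimately show "\<exists>f. bij_betw f {0..<q} (cls i)"
      using ex_bij_betw_nat_finite[of "cls i"] by simp
  qed
  from bchoice[OF this] obtain blk where "\<forall>i\<in>{..<\<mu> * q}. bij_betw (blk i) {0..<q} (cls i)" ..
  then have "\<forall>i<\<mu> * q. bij_betw (blk i) {0..<q} (cls i)" by simp
  then have "labelled_net \<mu> q X B PB PX cls blk"
    using assms(1,2) card_points blocks PB(1,4) PX cls by (unfold_locales; blast)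
  then show ?thesis by (rule that)
qed

lemma image_filter_bij_betw:
  assumes "bij_betw \<phi> X X'" "\<forall>x\<in>X. P x \<longleftrightarrow> Q (\<phi> x)"
  shows "\<phi> ` {x\<in>X. P x} = {y\<in>X'. Q y}"
  using assms unfolding bij_betw_def by auto

lemma reindex_permutes_image:
  fixes \<sigma> :: "nat \<Rightarrow> nat" and \<pi> :: "nat \<Rightarrow> nat \<Rightarrow> nat"
  assumes \<sigma>: "\<sigma> permutes {0..<n}" and \<pi>: "\<forall>i<n. \<pi> i permutes {0..<q}"
  shows "(\<lambda>(j, a). (inv \<sigma> j, \<pi> (inv \<sigma> j) a)) ` ({0..<n} \<times> {0..<q}) = {0..<n} \<times> {0..<q}"
    (is "?g ` ?I = ?I")
proof
  have inv_\<sigma>_less: "inv \<sigma> j < n" if "j < n" for j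
    using permutes_in_image[OF permutes_inv[OF \<sigma>], of j] that by auto
  show "?g ` ?I \<subseteq> ?I"
    using inv_\<sigma>_less permutes_in_image[OF \<pi>[rule_format, OF inv_\<sigma>_less]] by auto
  show "?I \<subseteq> ?g ` ?I"
  proof
    fix p assume "p \<in> ?I"
    then obtain i b where ib: "i < n" "b < q" "p = (i, b)" by auto
    have "inv \<sigma> (\<sigma> i) = i" using permutes_inverses(2)[OF \<sigma>] .
    moreover have "\<pi> i (inv (\<pi> i) b) = b" using permutes_inverses(1)[OF \<pi>[rule_format, OF ib(1)]] .
    moreover have "\<sigma> i < n" using permutes_in_image[OF \<sigma>, of i] ib(1) by auto
    moreover have "inv (\<pi> i) b < q"
      using permutes_in_image[OF permutes_inv[OF \<pi>[rule_format, OF ib(1)]], of b] ib(2) by auto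
    ultimately show "p \<in> ?g ` ?I" using ib by (intro image_eqI[of _ _ "(\<sigma> i, inv (\<pi> i) b)"]) auto
  qed
qed

text \<open>A point bijection that acts on the codewords as the equivalence \<open>recode n \<sigma> \<pi>\<close> maps the
  block \<open>(j, a)\<close> onto the block \<open>(\<sigma>\<inverse> j, \<pi> (\<sigma>\<inverse> j) a)\<close>.\<close>

lemma coord_blocks_image_recode:
  assumes \<phi>: "bij_betw \<phi> X X'" and h': "\<forall>x\<in>X. h' (\<phi> x) = recode n \<sigma> \<pi> (h x)"
    and \<sigma>: "\<sigma> permutes {0..<n}" and \<pi>: "\<forall>i<n. \<pi> i permutes {0..<q}"
  shows "(\<lambda>b. \<phi> ` b) ` coord_blocks n q h X = coord_blocks n q h' X'"
proof -
  let ?g = "\<lambda>(j, a). (inv \<sigma> j, \<pi> (inv \<sigma> j) a)"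
  have "\<phi> ` coord_block h X p = coord_block h' X' (?g p)" if p_mem: "p \<in> {0..<n} \<times> {0..<q}" for p
  proof -
    obtain j a where p: "p = (j, a)" "j < n" using p_mem by auto
    have j: "inv \<sigma> j < n" "\<sigma> (inv \<sigma> j) = j"
      using permutes_in_image[OF permutes_inv[OF \<sigma>], of j] permutes_inverses(1)[OF \<sigma>, of j] p(2)
      by auto
    have "inj (\<pi> (inv \<sigma> j))" using \<pi> j(1) permutes_inj by blast
    then have "h x ! j = a \<longleftrightarrow> h' (\<phi> x) ! inv \<sigma> j = \<pi> (inv \<sigma> j) a" if "x \<in> X" for x
      using h' that j by (simp add: recode_nth inj_eq)
    then show ?thesis unfolding p by (simp add: coord_block_Pair image_filter_bij_betw[OF \<phi>])
  qed
  then have "(\<lambda>b. \<phi> ` b) ` coord_blocks n q h X = coord_block h' X' ` ?g ` ({0..<n} \<times> {0..<q})"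
    unfolding coord_blocks_def image_image by (intro image_cong) auto
  then show ?thesis unfolding coord_blocks_def reindex_permutes_image[OF \<sigma> \<pi>] .
qed

lemma net_iso_if_code_equiv:
  assumes h: "bij_betw h X C" and h': "bij_betw h' X' C'"
    and length: "\<forall>w\<in>C. length w = n" and equiv: "(C, C') \<in> code_equiv q n"
  shows "((X, coord_blocks n q h X), (X', coord_blocks n q h' X')) \<in> net_iso"
proof -
  obtain \<sigma> \<pi> where \<sigma>: "\<sigma> permutes {0..<n}" and \<pi>: "\<forall>i<n. \<pi> i permutes {0..<q}"
    and C': "C' = recode n \<sigma> \<pi> ` C"
    using equiv unfolding code_equiv_iff_recode by blast
  define \<phi> where "\<phi> = inv_into X' h' \<circ> recode n \<sigma> \<pi> \<circ> h"
  have "bij_betw (recode n \<sigma> \<pi>) C C'"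
    using inj_on_recode[OF \<sigma> \<pi> length] C' unfolding bij_betw_def by simp
  then have \<phi>_bij: "bij_betw \<phi> X X'"
    unfolding \<phi>_def using bij_betw_trans[OF bij_betw_trans[OF h] bij_betw_inv_into[OF h']]
    by (simp add: comp_assoc)
  have "\<forall>x\<in>X. h' (\<phi> x) = recode n \<sigma> \<pi> (h x)"
  proof
    fix x assume "x \<in> X"
    then have "recode n \<sigma> \<pi> (h x) \<in> h' ` X'" using h h' C' unfolding bij_betw_def by auto
    then show "h' (\<phi> x) = recode n \<sigma> \<pi> (h x)" unfolding \<phi>_def by (simp add: f_inv_into_f)
  qed
  from coord_blocks_image_recode[OF \<phi>_bij this \<sigma> \<pi>] show ?thesis
    unfolding net_iso_def using \<phi>_bij by auto
qed

lemma permutes_restrict_if_inj_on: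
  fixes f :: "nat \<Rightarrow> nat"
  assumes "inj_on f {0..<n}" "\<forall>x<n. f x < n"
  shows "(\<lambda>x. if x < n then f x else x) permutes {0..<n}"
proof (rule bij_imp_permutes)
  let ?f = "\<lambda>x. if x < n then f x else x"
  have "inj_on ?f {0..<n}" using assms(1) by (simp add: inj_on_def)
  moreover have "?f ` {0..<n} \<subseteq> {0..<n}" using assms(2) by auto
  ultimately show "bij_betw ?f {0..<n} {0..<n}"
    unfolding bij_betw_def using endo_inj_surj[OF finite_atLeastLessThan] by blast
qed simp

locale code_net_iso =
  src: extremal_code_points \<mu> q C X h + tgt: extremal_code_points \<mu> q C' X' h'
  for \<mu> q C X h C' X' h' +
  fixes \<phi> :: "nat \<Rightarrow> nat"
  assumes \<phi>_bij: "bij_betw \<phi> X X'"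
    and \<phi>_blocks: "(\<lambda>b. \<phi> ` b) ` coord_blocks (\<mu> * q) q h X = coord_blocks (\<mu> * q) q h' X'"
begin

abbreviation indices :: "(nat \<times> nat) set" where
  "indices \<equiv> {0..<\<mu> * q} \<times> {0..<q}"

definition block_map :: "nat \<times> nat \<Rightarrow> nat \<times> nat" where
  "block_map p = (SOME p'. p' \<in> indices \<and> \<phi> ` coord_block h X p = coord_block h' X' p')"

lemma block_map:
  assumes "p \<in> indices"
  shows "block_map p \<in> indices" and "\<phi> ` coord_block h X p = coord_block h' X' (block_map p)"
proof -
  have "\<phi> ` coord_block h X p \<in> coord_blocks (\<mu> * q) q h' X'"
    using \<phi>_blocks assms unfolding coord_blocks_def by blast
  then have "\<exists>p'. p' \<in> indices \<and> \<phi> ` coord_block h X p = coord_block h' X' p'"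
    unfolding coord_blocks_def by blast
  from someI_ex[OF this]
  show "block_map p \<in> indices" "\<phi> ` coord_block h X p = coord_block h' X' (block_map p)"
    unfolding block_map_def by blast+
qed

lemma block_map_eq_iff:
  assumes "p \<in> indices" "p' \<in> indices"
  shows "block_map p = block_map p' \<longleftrightarrow> p = p'"
  using block_map[OF assms(1)] block_map[OF assms(2)] src.coord_block_inj[OF assms]
    inj_on_image_eq_iff[OF bij_betw_imp_inj_on[OF \<phi>_bij] coord_block_subset coord_block_subset]
  by metis

text \<open>Two blocks lie in the same parallel class iff they are disjoint, and \<open>\<phi>\<close> preserves
  disjointness.\<close>

lemma fst_block_map_eq_iff:
  assumes "p \<in> indices" "p' \<in> indices"
  shows "fst (block_map p) = fst (block_map p') \<longleftrightarrow> fst p = fst p'"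
proof (cases "p = p'")
  case False
  then have "block_map p \<noteq> block_map p'" using block_map_eq_iff[OF assms] by simp
  moreover have "\<phi> ` (coord_block h X p \<inter> coord_block h X p') =
      coord_block h' X' (block_map p) \<inter> coord_block h' X' (block_map p')"
    using inj_on_image_Int[OF bij_betw_imp_inj_on[OF \<phi>_bij] coord_block_subset coord_block_subset]
      block_map(2)[OF assms(1)] block_map(2)[OF assms(2)] by simp
  ultimately show ?thesis
    using src.coord_block_Int_eq_empty_iff[OF assms False]
      tgt.coord_block_Int_eq_empty_iff[OF block_map(1)[OF assms(1)] block_map(1)[OF assms(2)]]
    by (metis image_is_empty)
qed simp

definition column_map :: "nat \<Rightarrow> nat" where
  "column_map j = fst (block_map (j, 0))"

lemma fst_block_map: "j < \<mu> * q \<Longrightarrow> a < q \<Longrightarrow> fst (block_map (j, a)) = column_map j"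
  unfolding column_map_def using fst_block_map_eq_iff[of "(j, a)" "(j, 0)"] src.q_ge_2 by simp

lemma column_map_less: "j < \<mu> * q \<Longrightarrow> column_map j < \<mu> * q"
  unfolding column_map_def using block_map(1)[of "(j, 0)"] src.q_ge_2 by auto

lemma inj_on_column_map: "inj_on column_map {0..<\<mu> * q}"
proof (rule inj_onI)
  fix j j' assume "j \<in> {0..<\<mu> * q}" "j' \<in> {0..<\<mu> * q}" "column_map j = column_map j'"
  then show "j = j'"
    using fst_block_map_eq_iff[of "(j, 0)" "(j', 0)"] src.q_ge_2 unfolding column_map_def by simp
qed

definition column_perm :: "nat \<Rightarrow> nat" where
  "column_perm = inv (\<lambda>j. if j < \<mu> * q then column_map j else j)"

lemma column_perm_permutes: "column_perm permutes {0..<\<mu> * q}"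
  and column_map_column_perm: "i < \<mu> * q \<Longrightarrow> column_map (column_perm i) = i"
  and column_perm_less: "i < \<mu> * q \<Longrightarrow> column_perm i < \<mu> * q"
proof -
  have perm: "(\<lambda>j. if j < \<mu> * q then column_map j else j) permutes {0..<\<mu> * q}"
    using permutes_restrict_if_inj_on inj_on_column_map column_map_less by blast
  then show perm_inv: "column_perm permutes {0..<\<mu> * q}"
    unfolding column_perm_def by (rule permutes_inv)
  show "column_perm i < \<mu> * q" if "i < \<mu> * q"
    using permutes_in_image[OF perm_inv, of i] that by auto
  then show "column_map (column_perm i) = i" if "i < \<mu> * q"
    using permutes_inverses(1)[OF perm, of i] that unfolding column_perm_def by simp
qed

definition symbol_perm :: "nat \<Rightarrow> nat \<Rightarrow> nat" where
  "symbol_perm i a = (if a < q then snd (block_map (column_perm i, a)) else a)"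

lemma block_map_column_perm:
  "i < \<mu> * q \<Longrightarrow> a < q \<Longrightarrow> block_map (column_perm i, a) = (i, symbol_perm i a)"
  using fst_block_map[OF column_perm_less] column_map_column_perm
  unfolding symbol_perm_def by (simp add: prod_eq_iff)

lemma symbol_perm_permutes:
  assumes "i < \<mu> * q"
  shows "symbol_perm i permutes {0..<q}"
proof -
  have "inj_on (symbol_perm i) {0..<q}"
  proof (rule inj_onI)
    fix a a' assume a: "a \<in> {0..<q}" "a' \<in> {0..<q}" "symbol_perm i a = symbol_perm i a'"
    then have "block_map (column_perm i, a) = block_map (column_perm i, a')"
      using block_map_column_perm[OF assms] by simp
    then show "a = a'"
      using block_map_eq_iff[of "(column_perm i, a)" "(column_perm i, a')"]
        column_perm_less[OF assms] a(1,2) by simp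
  qed
  moreover have "symbol_perm i a < q" if "a < q" for a
    using block_map(1)[of "(column_perm i, a)"] column_perm_less[OF assms] that
    unfolding symbol_perm_def by auto
  ultimately show ?thesis
    using permutes_restrict_if_inj_on[of "symbol_perm i" q]
    unfolding symbol_perm_def by (simp cong: if_cong)
qed

lemma codeword_\<phi>_eq_recode: "x \<in> X \<Longrightarrow> h' (\<phi> x) = recode (\<mu> * q) column_perm symbol_perm (h x)"
proof (rule nth_equalityI)
  fix i assume x: "x \<in> X" and "i < length (h' (\<phi> x))"
  then have i: "i < \<mu> * q"
    using tgt.length_codeword tgt.h_in_code \<phi>_bij unfolding bij_betw_def by auto
  let ?a = "h x ! column_perm i"
  have a: "?a < q" using src.codeword_nth_less[OF src.h_in_code[OF x] column_perm_less[OF i]] .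
  have "x \<in> coord_block h X (column_perm i, ?a)" using x unfolding coord_block_Pair by simp
  then have "\<phi> x \<in> coord_block h' X' (i, symbol_perm i ?a)"
    using block_map(2)[of "(column_perm i, ?a)"] block_map_column_perm[OF i a]
      column_perm_less[OF i] a by auto
  then show "h' (\<phi> x) ! i = recode (\<mu> * q) column_perm symbol_perm (h x) ! i"
    unfolding coord_block_Pair using i by (simp add: recode_nth)
qed (use tgt.length_codeword tgt.h_in_code \<phi>_bij in \<open>auto simp: bij_betw_def length_recode\<close>)

theorem code_equiv: "(C, C') \<in> code_equiv q (\<mu> * q)"
proof -
  have "C' = h' ` \<phi> ` X" using \<phi>_bij tgt.h_bij unfolding bij_betw_def by simp
  also have "\<dots> = recode (\<mu> * q) column_perm symbol_perm ` C"
    using codeword_\<phi>_eq_recode src.h_bij unfolding bij_betw_def by (auto simp: image_image)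
  finally show ?thesis unfolding code_equiv_iff_recode
    using column_perm_permutes symbol_perm_permutes by blast
qed

end

lemma ex_code_of_symmetric_net:
  assumes "0 < \<mu>" "2 \<le> q" "symmetric_net \<mu> q X B"
  shows "\<exists>C\<in>codes q (\<mu> * q) (\<mu> * q\<^sup>2) (\<mu> * q - \<mu>). is_code_net (\<mu> * q) q (X, B) C"
proof -
  obtain PB PX cls blk where "labelled_net \<mu> q X B PB PX cls blk"
    using symmetric_net_labelling[OF assms] .
  then interpret labelled_net \<mu> q X B PB PX cls blk .
  show ?thesis using word_code is_code_net_word by blast
qed

lemma ex_symmetric_net_of_code:
  assumes "0 < \<mu>" "2 \<le> q" "C \<in> codes q (\<mu> * q) (\<mu> * q\<^sup>2) (\<mu> * q - \<mu>)"
  shows "\<exists>N\<in>symmetric_nets \<mu> q. is_code_net (\<mu> * q) q N C"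
proof -
  interpret extremal_code \<mu> q C using assms by unfold_locales
  obtain h where h: "bij_betw h {0..<card C} C"
    using ex_bij_betw_nat_finite[OF finite_code] by blast
  then interpret extremal_code_points \<mu> q C "{0..<card C}" h by unfold_locales
  have "({0..<card C}, coord_blocks (\<mu> * q) q h {0..<card C}) \<in> symmetric_nets \<mu> q"
    unfolding symmetric_nets_def using symmetric_net_coord_blocks by simp
  moreover have "is_code_net (\<mu> * q) q ({0..<card C}, coord_blocks (\<mu> * q) q h {0..<card C}) C"
    unfolding is_code_net_def using h by auto
  ultimately show ?thesis by blast
qed

lemma net_iso_iff_code_equiv:
  assumes "0 < \<mu>" "2 \<le> q"
    and C: "C \<in> codes q (\<mu> * q) (\<mu> * q\<^sup>2) (\<mu> * q - \<mu>)"
    and C': "C' \<in> codes q (\<mu> * q) (\<mu> * q\<^sup>2) (\<mu> * q - \<mu>)"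
    and N: "is_code_net (\<mu> * q) q N C" and N': "is_code_net (\<mu> * q) q N' C'"
  shows "(N, N') \<in> net_iso \<longleftrightarrow> (C, C') \<in> code_equiv q (\<mu> * q)"
proof -
  obtain X B X' B' h h' where NN': "N = (X, B)" "N' = (X', B')"
    and h: "bij_betw h X C" "B = coord_blocks (\<mu> * q) q h X"
    and h': "bij_betw h' X' C'" "B' = coord_blocks (\<mu> * q) q h' X'"
    using N N' unfolding is_code_net_def by (cases N, cases N') auto
  interpret src: extremal_code_points \<mu> q C X h using assms(1,2) C h(1) by unfold_locales
  interpret tgt: extremal_code_points \<mu> q C' X' h' using assms(1,2) C' h'(1) by unfold_locales
  show ?thesis
  proof
    assume "(N, N') \<in> net_iso"
    then obtain \<phi> where "bij_betw \<phi> X X'" "(\<lambda>b. \<phi> ` b) ` B = B'"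
      using NN' unfolding net_iso_def by auto
    then interpret code_net_iso \<mu> q C X h C' X' h' \<phi> using h(2) h'(2) by unfold_locales simp_all
    show "(C, C') \<in> code_equiv q (\<mu> * q)" by (rule code_equiv)
  next
    assume "(C, C') \<in> code_equiv q (\<mu> * q)"
    then show "(N, N') \<in> net_iso"
      using net_iso_if_code_equiv[OF h(1) h'(1) length_mem_codes[OF C]] NN' h(2) h'(2) by blast
  qed
qed

theorem theorem5p13:
  fixes \<mu> q :: nat
  assumes "0 < \<mu>" and "2 \<le> q"
  shows "\<exists>f. bij_betw f (symmetric_nets \<mu> q // net_iso)
                        (codes q (\<mu> * q) (\<mu> * q^2) (\<mu> * q - \<mu>) // code_equiv q (\<mu> * q))"
proof (rule bij_betw_quotients_if_compatible[where R = "is_code_net (\<mu> * q) q"])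
  show "trans net_iso" "trans (code_equiv q (\<mu> * q))" by (rule net_iso_trans code_equiv_trans)+
  show "(N, N) \<in> net_iso" for N by (rule net_iso_refl)
  show "(N', N) \<in> net_iso" if "N \<in> symmetric_nets \<mu> q" "(N, N') \<in> net_iso" for N N'
    using that net_iso_sym
    unfolding symmetric_nets_def symmetric_net_def by (cases N, cases N') auto
  show "(C, C) \<in> code_equiv q (\<mu> * q)" if "C \<in> codes q (\<mu> * q) (\<mu> * q^2) (\<mu> * q - \<mu>)" for C
    using code_equiv_refl length_mem_codes[OF that] by blast
  show "(C', C) \<in> code_equiv q (\<mu> * q)"
    if "C \<in> codes q (\<mu> * q) (\<mu> * q^2) (\<mu> * q - \<mu>)" "(C, C') \<in> code_equiv q (\<mu> * q)" for C C'
    using code_equiv_sym length_mem_codes[OF that(1)] that(2) by blast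
  show "\<exists>C\<in>codes q (\<mu> * q) (\<mu> * q^2) (\<mu> * q - \<mu>). is_code_net (\<mu> * q) q N C"
    if "N \<in> symmetric_nets \<mu> q" for N
    using that ex_code_of_symmetric_net[OF assms] unfolding symmetric_nets_def by auto
qed (use ex_symmetric_net_of_code net_iso_iff_code_equiv assms in blast)+

end
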